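(* Let $D$ be an integral domain and let $p$ be a prime element of $D$ such that $\bigcap_{n=1}^\infty p^nD=0$. Let $R$ be a commutative ring with $D\subseteq R$ a (unital) ring extension such that $p$ is a unit of $R$. Then $R$ has a maximal subring $W$ which is integrally closed in $R$, contains $D$, and conches $\frac{1}{p}$ in $R$ (that is, $p\in W$, $\frac{1}{p}\notin W$, and $W$ is maximal among subrings of $R$ containing $p$ and not containing $\frac1p$).
   Context: All rings are commutative with $1\neq 0$ and all subrings and ring extensions are unital. A maximal subring of a ring $R$ is a proper subring of $R$ that is maximal with respect to inclusion among proper subrings of $R$. For a ring $T$ and a unit $x\in T$, a subring $V$ of $T$ is said to conch $x$ in $T$ (or to be an $x$-conch subring) if $x^{-1}\in V$, $x\notin V$, and $V$ is maximal with respect to inclusion among subrings of $T$ containing $x^{-1}$ but not $x$. *)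

theory Defs
  imports Main
begin

text \<open>The ambient ring R is the whole type 'a (a commutative ring with 1 \<noteq> 0).
  Subrings are unital subsets.\<close>

definition is_subring :: "'a::comm_ring_1 set \<Rightarrow> bool" where
  "is_subring S \<longleftrightarrow> 1 \<in> S \<and> (\<forall>x\<in>S. \<forall>y\<in>S. x + y \<in> S \<and> x * y \<in> S) \<and> (\<forall>x\<in>S. - x \<in> S)"

definition maximal_subring :: "'a::comm_ring_1 set \<Rightarrow> bool" where
  "maximal_subring W \<longleftrightarrow> is_subring W \<and> W \<noteq> UNIV \<and>
     (\<forall>S. is_subring S \<and> W \<subseteq> S \<and> S \<noteq> UNIV \<longrightarrow> S = W)"

definition integral_over :: "'a::comm_ring_1 set \<Rightarrow> 'a \<Rightarrow> bool" where
  "integral_over S x \<longleftrightarrow> (\<exists>n c. (\<forall>i<n. c i \<in> S) \<and> x ^ n + (\<Sum>i<n. c i * x ^ i) = 0)"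

definition integrally_closed_in :: "'a::comm_ring_1 set \<Rightarrow> bool" where
  "integrally_closed_in S \<longleftrightarrow> (\<forall>x. integral_over S x \<longrightarrow> x \<in> S)"

definition conches :: "'a::comm_ring_1 set \<Rightarrow> 'a \<Rightarrow> bool" where
  "conches V x \<longleftrightarrow> (\<exists>y. x * y = 1 \<and> is_subring V \<and> y \<in> V \<and> x \<notin> V \<and>
     (\<forall>S. is_subring S \<and> V \<subseteq> S \<and> y \<in> S \<and> x \<notin> S \<longrightarrow> S = V))"

definition integral_domain_subring :: "'a::comm_ring_1 set \<Rightarrow> bool" where
  "integral_domain_subring D \<longleftrightarrow> is_subring D \<and>
     (\<forall>a\<in>D. \<forall>b\<in>D. a * b = 0 \<longrightarrow> a = 0 \<or> b = 0)"

definition prime_in :: "'a::comm_ring_1 set \<Rightarrow> 'a \<Rightarrow> bool" where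
  "prime_in D p \<longleftrightarrow> p \<in> D \<and> p \<noteq> 0 \<and> \<not> (\<exists>u\<in>D. p * u = 1) \<and>
     (\<forall>a\<in>D. \<forall>b\<in>D. (\<exists>c\<in>D. a * b = p * c) \<longrightarrow> (\<exists>c\<in>D. a = p * c) \<or> (\<exists>c\<in>D. b = p * c))"

end

theory Submission
  imports Defs "Jordan_Normal_Form.Determinant"
begin

text \<open>
  A subring \<open>W\<close> that contains \<open>p\<close> but not \<open>q = 1/p\<close>, and is maximal with this property (it exists
  by Zorn's lemma), is integrally closed: if \<open>z \<notin> W\<close> is integral over \<open>W\<close>, then \<open>q \<in> W[z]\<close>, and the
  determinant trick applied to the finitely generated \<open>W\<close>-module \<open>W[z]\<close> gives \<open>1 \<in> pW\<close>. Such a \<open>W\<close>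
  is moreover a maximal subring as soon as \<open>W[q]\<close> is the whole ring, i.e. \<open>p^n r \<in> W\<close> for every \<open>r\<close>
  and some \<open>n\<close>.

  It therefore suffices to find a subring \<open>V \<supseteq> D\<close> not containing \<open>q\<close> with \<open>p^n r \<in> V\<close> for all \<open>r\<close>.
  Since the powers of \<open>p\<close> intersect in \<open>0\<close>, the \<open>p\<close>-adic order is a \<open>\<nat>\<close>-valued valuation on \<open>D\<close>.
  Working modulo a prime \<open>P\<close> of the ring with \<open>P \<inter> D = 0\<close>, Zorn's lemma extends it to a
  \<open>\<nat>\<close>-valued valuation \<open>v\<close> on a subring \<open>A\<close> over which every element is algebraic (transcendental
  elements would admit a Gauss extension), and then \<open>A\<close> to a maximal subring \<open>V\<close> dominating \<open>v\<close>.
  Such a \<open>V\<close> is integrally closed (again by the determinant trick) and does not contain \<open>q\<close>, as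
  \<open>v p = 1\<close>. An algebraic \<open>r\<close> has a multiple \<open>a r\<close>, \<open>a \<in> A - P\<close>, that is integral over \<open>A\<close>,
  hence \<open>a r \<in> V\<close>, and then also \<open>p^(v a) r \<in> V\<close>.
\<close>


lemma Zorn_above:
  assumes "S0 \<in> F"
    and "\<And>C. C \<subseteq> F \<Longrightarrow> chain\<^sub>\<subseteq> C \<Longrightarrow> C \<noteq> {} \<Longrightarrow> \<Union>C \<in> F"
  obtains M where "M \<in> F" "S0 \<subseteq> M" "\<And>X. X \<in> F \<Longrightarrow> M \<subseteq> X \<Longrightarrow> X = M"
proof -
  let ?G = "{X\<in>F. S0 \<subseteq> X}"
  have "\<exists>M\<in>?G. \<forall>X\<in>?G. M \<subseteq> X \<longrightarrow> X = M"
  proof (rule subset_Zorn_nonempty)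
    show "?G \<noteq> {}"
      using assms(1) by blast
  next
    fix C assume C: "C \<noteq> {}" "subset.chain ?G C"
    then have "C \<subseteq> F" "chain\<^sub>\<subseteq> C" "\<forall>X\<in>C. S0 \<subseteq> X"
      unfolding subset_chain_def chain_subset_def by auto
    moreover have "S0 \<subseteq> \<Union>C"
      using C(1) \<open>\<forall>X\<in>C. S0 \<subseteq> X\<close> by blast
    ultimately show "\<Union>C \<in> ?G"
      using assms(2) C(1) by blast
  qed
  then obtain M where M: "M \<in> F" "S0 \<subseteq> M" and max: "\<forall>X\<in>?G. M \<subseteq> X \<longrightarrow> X = M"
    by blast
  have "X = M" if "X \<in> F" "M \<subseteq> X" for X
    using max that M(2) by auto
  then show thesis
    using M that by blast
qed

lemma chain_subset_common:
  assumes "chain\<^sub>\<subseteq> C" "a \<in> \<Union>C" "b \<in> \<Union>C"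
  shows "\<exists>S\<in>C. a \<in> S \<and> b \<in> S"
proof -
  obtain S T where "S \<in> C" "T \<in> C" "a \<in> S" "b \<in> T"
    using assms(2,3) by blast
  moreover have "S \<subseteq> T \<or> T \<subseteq> S"
    using assms(1) \<open>S \<in> C\<close> \<open>T \<in> C\<close> unfolding chain_subset_def by blast
  ultimately show ?thesis
    by blast
qed

section \<open>Subrings and adjunction\<close>

lemma subring_1: "is_subring S \<Longrightarrow> 1 \<in> S"
  by (simp add: is_subring_def)

lemma subring_add: "is_subring S \<Longrightarrow> a \<in> S \<Longrightarrow> b \<in> S \<Longrightarrow> a + b \<in> S"
  by (simp add: is_subring_def)

lemma subring_mult: "is_subring S \<Longrightarrow> a \<in> S \<Longrightarrow> b \<in> S \<Longrightarrow> a * b \<in> S"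
  by (simp add: is_subring_def)

lemma subring_uminus: "is_subring S \<Longrightarrow> a \<in> S \<Longrightarrow> - a \<in> S"
  by (simp add: is_subring_def)

lemma subring_0: "is_subring S \<Longrightarrow> 0 \<in> S"
  using subring_add[OF _ subring_1 subring_uminus[OF _ subring_1]] by simp

lemma subring_diff: "is_subring S \<Longrightarrow> a \<in> S \<Longrightarrow> b \<in> S \<Longrightarrow> a - b \<in> S"
  by (metis diff_conv_add_uminus subring_add subring_uminus)

lemma subring_power: "is_subring S \<Longrightarrow> a \<in> S \<Longrightarrow> a ^ n \<in> S"
  by (induction n) (auto intro: subring_1 subring_mult)

lemma subring_sum: "is_subring S \<Longrightarrow> (\<And>i. i \<in> F \<Longrightarrow> f i \<in> S) \<Longrightarrow> sum f F \<in> S"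
  by (induction F rule: infinite_finite_induct) (auto intro: subring_0 subring_add)

lemma subring_Union_chain:
  assumes "C \<noteq> {}" "chain\<^sub>\<subseteq> C" "\<forall>S\<in>C. is_subring S"
  shows "is_subring (\<Union>C)"
  unfolding is_subring_def
proof (intro conjI ballI)
  obtain S where "S \<in> C"
    using assms(1) by blast
  then show "1 \<in> \<Union>C"
    using assms(3) subring_1 by blast
next
  fix x y assume "x \<in> \<Union>C" "y \<in> \<Union>C"
  then obtain S where "S \<in> C" "x \<in> S" "y \<in> S"
    using chain_subset_common[OF assms(2)] by blast
  then show "x + y \<in> \<Union>C" "x * y \<in> \<Union>C"
    using assms(3) subring_add subring_mult by blast+
next
  fix x assume "x \<in> \<Union>C"
  then obtain S where "S \<in> C" "x \<in> S"
    by blast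
  then show "- x \<in> \<Union>C"
    using assms(3) subring_uminus by blast
qed

definition adjoin :: "'a::comm_ring_1 set \<Rightarrow> 'a \<Rightarrow> 'a set" where
  "adjoin S x = {poly g x | g. \<forall>i. coeff g i \<in> S}"

lemma coeff_mult_in_subring:
  "is_subring S \<Longrightarrow> \<forall>i. coeff f i \<in> S \<Longrightarrow> \<forall>i. coeff g i \<in> S \<Longrightarrow> \<forall>i. coeff (f * g) i \<in> S"
  by (auto simp: coeff_mult intro!: subring_sum subring_mult)

lemma coeff_pCons_in_subring:
  "is_subring S \<Longrightarrow> a \<in> S \<Longrightarrow> \<forall>i. coeff g i \<in> S \<Longrightarrow> \<forall>i. coeff (pCons a g) i \<in> S"
  by (simp add: coeff_pCons split: nat.split)

lemma coeff_const_in_subring: "is_subring S \<Longrightarrow> a \<in> S \<Longrightarrow> \<forall>i. coeff [:a:] i \<in> S"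
  by (simp add: coeff_pCons_in_subring subring_0)

lemma adjoin_subring:
  assumes S: "is_subring S"
  shows "is_subring (adjoin S x)"
proof -
  have "1 \<in> adjoin S x"
    unfolding adjoin_def using coeff_const_in_subring[OF S subring_1[OF S]]
    by (intro CollectI exI[of _ "[:1:]"]) simp
  moreover have "a + b \<in> adjoin S x \<and> a * b \<in> adjoin S x \<and> - a \<in> adjoin S x"
    if ab: "a \<in> adjoin S x" "b \<in> adjoin S x" for a b
  proof -
    obtain f g where f: "\<forall>i. coeff f i \<in> S" "a = poly f x" and g: "\<forall>i. coeff g i \<in> S" "b = poly g x"
      using ab unfolding adjoin_def by blast
    have "a + b = poly (f + g) x" "a * b = poly (f * g) x" "- a = poly (- f) x"
      using f g by simp_all
    moreover have "\<forall>i. coeff (f + g) i \<in> S" "\<forall>i. coeff (- f) i \<in> S"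
      using f g S by (simp_all add: subring_add subring_uminus)
    ultimately show ?thesis
      using coeff_mult_in_subring[OF S f(1) g(1)] unfolding adjoin_def by blast
  qed
  ultimately show ?thesis
    unfolding is_subring_def by blast
qed

lemma subset_adjoin: "is_subring S \<Longrightarrow> S \<subseteq> adjoin S x"
proof
  fix a assume "is_subring S" "a \<in> S"
  then show "a \<in> adjoin S x"
    unfolding adjoin_def using coeff_const_in_subring by (intro CollectI exI[of _ "[:a:]"]) simp
qed

lemma gen_in_adjoin: "is_subring S \<Longrightarrow> x \<in> adjoin S x"
  unfolding adjoin_def
  using coeff_pCons_in_subring[OF _ subring_0 coeff_const_in_subring[OF _ subring_1]]
  by (intro CollectI exI[of _ "[:0, 1:]"]) auto

definition power_span :: "'a::comm_ring_1 set \<Rightarrow> 'a \<Rightarrow> nat \<Rightarrow> 'a set" where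
  "power_span S x K = {\<Sum>l<K. s l * x ^ l | s. \<forall>l<K. s l \<in> S}"

lemma power_span_add:
  assumes "is_subring S" "a \<in> power_span S x K" "b \<in> power_span S x K"
  shows "a + b \<in> power_span S x K"
proof -
  obtain s t where "\<forall>l<K. s l \<in> S" "a = (\<Sum>l<K. s l * x ^ l)" "\<forall>l<K. t l \<in> S" "b = (\<Sum>l<K. t l * x ^ l)"
    using assms(2,3) unfolding power_span_def by blast
  then show ?thesis
    unfolding power_span_def using assms(1)
    by (intro CollectI exI[of _ "\<lambda>l. s l + t l"]) (auto simp: subring_add sum.distrib distrib_right)
qed

lemma power_span_const:
  assumes "is_subring S" "K \<ge> 1" "a \<in> S"
  shows "a \<in> power_span S x K"
proof -
  have "(\<Sum>l<K. (if l = 0 then a else 0) * x ^ l) = a"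
    using assms(2) by (simp add: if_distrib[of "\<lambda>y. y * _"] sum.delta cong: if_cong)
  then show ?thesis
    unfolding power_span_def using assms(1,3) subring_0
    by (intro CollectI exI[of _ "\<lambda>l. if l = 0 then a else 0"]) auto
qed

text \<open>The top power \<open>x^K\<close> is rewritten by the monic relation.\<close>

lemma power_span_mult_root:
  assumes S: "is_subring S" and K: "K = Suc K'" and c: "\<forall>i<K. c i \<in> S"
    and rel: "x ^ K + (\<Sum>i<K. c i * x ^ i) = 0"
    and a: "a \<in> power_span S x K"
  shows "x * a \<in> power_span S x K"
proof -
  obtain s where s: "\<forall>l<K. s l \<in> S" "a = (\<Sum>l<K. s l * x ^ l)"
    using a unfolding power_span_def by blast
  define t where "t l = (if l = 0 then 0 else s (l - 1)) - s K' * c l" for l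
  have "x * a = (\<Sum>l<K. s l * x ^ Suc l)"
    unfolding s(2) sum_distrib_left by (intro sum.cong refl) (simp add: mult_ac)
  also have "\<dots> = (\<Sum>l<K'. s l * x ^ Suc l) + s K' * x ^ K"
    unfolding K by simp
  also have "(\<Sum>l<K'. s l * x ^ Suc l) = (\<Sum>l<K. (if l = 0 then 0 else s (l - 1)) * x ^ l)"
    unfolding K sum.lessThan_Suc_shift by simp
  also have "s K' * x ^ K = (\<Sum>l<K. - (s K' * c l) * x ^ l)"
  proof -
    have "x ^ K = - (\<Sum>i<K. c i * x ^ i)"
      using rel by (simp add: eq_neg_iff_add_eq_0)
    then show ?thesis
      by (simp add: sum_distrib_left sum_negf mult.assoc)
  qed
  finally have "x * a = (\<Sum>l<K. t l * x ^ l)"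
    unfolding t_def by (simp only: sum.distrib[symmetric] diff_conv_add_uminus distrib_right)
  moreover have "\<forall>l<K. t l \<in> S"
    using s(1) c S K unfolding t_def by (auto intro!: subring_diff subring_mult subring_0 subring_uminus)
  ultimately show ?thesis
    unfolding power_span_def by blast
qed

lemma adjoin_subset_power_span:
  assumes S: "is_subring S" and K: "K \<ge> 1" and c: "\<forall>i<K. c i \<in> S"
    and rel: "x ^ K + (\<Sum>i<K. c i * x ^ i) = 0"
  shows "adjoin S x \<subseteq> power_span S x K"
proof
  fix t assume "t \<in> adjoin S x"
  then obtain g where g: "\<forall>i. coeff g i \<in> S" "t = poly g x"
    unfolding adjoin_def by blast
  obtain K' where K': "K = Suc K'"
    using K by (cases K) auto
  have "poly g x \<in> power_span S x K"
    using g(1)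
  proof (induction g)
    case 0
    then show ?case using power_span_const[OF S K subring_0[OF S]] by simp
  next
    case (pCons a g)
    then have "a \<in> S" "\<forall>i. coeff g i \<in> S"
      by (metis coeff_pCons_0, metis coeff_pCons_Suc)
    then show ?case
      using pCons.IH power_span_const[OF S K] power_span_add[OF S]
        power_span_mult_root[OF S K' c rel] by simp
  qed
  then show "t \<in> power_span S x K"
    using g(2) by simp
qed

lemma adjoin_mult_power_in_power_span:
  assumes S: "is_subring S" and K: "K \<ge> 1" and c: "\<forall>i<K. c i \<in> S"
    and rel: "x ^ K + (\<Sum>i<K. c i * x ^ i) = 0" and t: "t \<in> adjoin S x"
  shows "\<exists>s. (\<forall>l<K. s l \<in> S) \<and> t * x ^ j = (\<Sum>l<K. s l * x ^ l)"
proof -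
  have "t * x ^ j \<in> adjoin S x"
    using subring_mult[OF adjoin_subring[OF S] t subring_power[OF adjoin_subring[OF S] gen_in_adjoin[OF S]]] .
  then show ?thesis
    using adjoin_subset_power_span[OF S K c rel] unfolding power_span_def by blast
qed

section \<open>The determinant trick\<close>

definition char_mat :: "nat \<Rightarrow> 'a::comm_ring_1 \<Rightarrow> (nat \<Rightarrow> nat \<Rightarrow> 'a) \<Rightarrow> 'a mat" where
  "char_mat k e E = mat k k (\<lambda>(i, j). (if i = j then e else 0) - E i j)"

lemma char_mat_mult_vec:
  assumes "\<forall>j<k. e * m j = (\<Sum>l<k. E j l * m l)"
  shows "char_mat k e E *\<^sub>v vec k m = 0\<^sub>v k"
proof (rule eq_vecI)
  fix j assume "j < dim_vec (0\<^sub>v k)"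
  then have j: "j < k"
    by simp
  have "(char_mat k e E *\<^sub>v vec k m) $ j = (\<Sum>l<k. ((if j = l then e else 0) - E j l) * m l)"
    using j unfolding char_mat_def mult_mat_vec_def scalar_prod_def
    by (auto simp: lessThan_atLeast0 intro!: sum.cong)
  also have "\<dots> = e * m j - (\<Sum>l<k. E j l * m l)"
    using j by (simp add: left_diff_distrib sum_subtractf if_distrib[of "\<lambda>x. x * m _"] cong: if_cong)
  finally show "(char_mat k e E *\<^sub>v vec k m) $ j = 0\<^sub>v k $ j"
    using assms j by simp
qed (simp add: char_mat_def)

text \<open>Cramer's rule: \<open>adj M * M = det M \<cdot> 1\<close> kills the vector \<open>m\<close>, whose first entry is \<open>1\<close>.\<close>

lemma det_char_mat_eq_0:
  fixes e :: "'a::comm_ring_1"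
  assumes k: "k \<ge> 1" and m0: "m 0 = 1"
    and rel: "\<forall>j<k. e * m j = (\<Sum>l<k. E j l * m l)"
  shows "det (char_mat k e E) = 0"
proof -
  define M where "M = char_mat k e E"
  define mv where "mv = vec k m"
  have Mc: "M \<in> carrier_mat k k" and mvc: "mv \<in> carrier_vec k"
    unfolding M_def char_mat_def mv_def by simp_all
  have "(det M \<cdot>\<^sub>m 1\<^sub>m k) *\<^sub>v mv = adj_mat M *\<^sub>v (M *\<^sub>v mv)"
    using adj_mat[OF Mc] assoc_mult_mat_vec[OF adj_mat(1)[OF Mc] Mc mvc] by simp
  also have "\<dots> = 0\<^sub>v k"
    unfolding M_def mv_def char_mat_mult_vec[OF rel] using adj_mat(1)[OF Mc[unfolded M_def]]
    by (intro eq_vecI) (auto simp: mult_mat_vec_def scalar_prod_def)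
  finally have "((det M \<cdot>\<^sub>m 1\<^sub>m k) *\<^sub>v mv) $ 0 = 0"
    using k by simp
  moreover have "((det M \<cdot>\<^sub>m 1\<^sub>m k) *\<^sub>v mv) $ 0 = (\<Sum>l<k. (if 0 = l then det M else 0) * m l)"
    using k unfolding mv_def mult_mat_vec_def scalar_prod_def
    by (auto simp: lessThan_atLeast0 intro!: sum.cong)
  moreover have "\<dots> = det M * m 0"
    using k by (simp add: sum.delta if_distrib[of "\<lambda>x. x * m _"] cong: if_cong)
  ultimately show ?thesis
    using m0 unfolding M_def by simp
qed

text \<open>The setting of a graded determinant trick: \<open>I n\<close> plays the role of the \<open>n\<close>-th power of an ideal
  containing \<open>e\<close>.\<close>

locale filtration =
  fixes I :: "nat \<Rightarrow> 'a::comm_ring_1 set" and e :: 'a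
  assumes zero_mem: "0 \<in> I n"
    and add_mem: "a \<in> I n \<Longrightarrow> b \<in> I n \<Longrightarrow> a + b \<in> I n"
    and uminus_mem: "a \<in> I n \<Longrightarrow> - a \<in> I n"
    and e_mult_mem: "a \<in> I n \<Longrightarrow> e * a \<in> I (Suc n)"
    and mult_mem: "a \<in> I n \<Longrightarrow> b \<in> I m \<Longrightarrow> a * b \<in> I (n + m)"
begin

lemma diff_mem: "a \<in> I n \<Longrightarrow> b \<in> I n \<Longrightarrow> a - b \<in> I n"
  by (metis add_mem diff_conv_add_uminus uminus_mem)

lemma sum_mem: "(\<And>x. x \<in> F \<Longrightarrow> g x \<in> I n) \<Longrightarrow> sum g F \<in> I n"
  by (induction F rule: infinite_finite_induct) (auto intro: zero_mem add_mem)

lemma e_power_mult_mem: "b \<in> I n \<Longrightarrow> e ^ j * b \<in> I (n + j)"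
  by (induction j) (auto simp: mult.assoc dest: e_mult_mem)

lemma char_mat_prod_mem:
  assumes E: "\<forall>j<k. \<forall>l<k. E j l \<in> I 1" and \<sigma>: "\<sigma> permutes {0..<k}"
  shows "n \<le> k \<Longrightarrow>
    (\<Prod>i=0..<n. char_mat k e E $$ (i, \<sigma> i)) - (if \<forall>i<n. \<sigma> i = i then e ^ n else 0) \<in> I n"
proof (induction n)
  case 0
  then show ?case using zero_mem by simp
next
  case (Suc n)
  have n: "n < k" "\<sigma> n < k"
    using Suc.prems \<sigma> by (simp_all add: permutes_in_image)
  define a where "a = (\<Prod>i=0..<n. char_mat k e E $$ (i, \<sigma> i)) - (if \<forall>i<n. \<sigma> i = i then e ^ n else 0)"
  define b where "b = E n (\<sigma> n)"
  have a: "a \<in> I n" and b: "b \<in> I 1"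
    using Suc n E unfolding a_def b_def by simp_all
  have entry: "char_mat k e E $$ (n, \<sigma> n) = (if \<sigma> n = n then e else 0) - b"
    using n unfolding char_mat_def b_def by auto
  have "(\<Prod>i=0..<Suc n. char_mat k e E $$ (i, \<sigma> i)) - (if \<forall>i<Suc n. \<sigma> i = i then e ^ Suc n else 0)
      = (if \<sigma> n = n then e * a else 0) - a * b - (if \<forall>i<n. \<sigma> i = i then e ^ n * b else 0)"
    unfolding prod.atLeast0_lessThan_Suc entry a_def
    by (cases "\<sigma> n = n"; cases "\<forall>i<n. \<sigma> i = i") (auto simp: less_Suc_eq algebra_simps)
  also have "\<dots> \<in> I (Suc n)"
  proof -
    have "(if \<sigma> n = n then e * a else 0) \<in> I (Suc n)" "a * b \<in> I (Suc n)"
      "(if \<forall>i<n. \<sigma> i = i then e ^ n * b else 0) \<in> I (Suc n)"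
      using e_mult_mem[OF a] mult_mem[OF a b] e_power_mult_mem[OF b, of n] zero_mem by simp_all
    then show ?thesis
      by (intro diff_mem)
  qed
  finally show ?case .
qed

lemma det_char_mat_minus_power_mem:
  assumes E: "\<forall>j<k. \<forall>l<k. E j l \<in> I 1"
  shows "det (char_mat k e E) - e ^ k \<in> I k"
proof -
  let ?S = "{\<sigma>. \<sigma> permutes {0..<k}}"
  let ?d = "\<lambda>\<sigma>. if \<forall>i<k. \<sigma> i = i then e ^ k else 0"
  have "(\<forall>i<k. \<sigma> i = i) \<longleftrightarrow> \<sigma> = id" if "\<sigma> \<in> ?S" for \<sigma>
    using that permutes_not_in[of \<sigma> "{0..<k}"] by (auto simp: fun_eq_iff)
  then have "(\<Sum>\<sigma>\<in>?S. signof \<sigma> * ?d \<sigma>) = (\<Sum>\<sigma>\<in>?S. if \<sigma> = id then e ^ k else 0)"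
    by (intro sum.cong) auto
  also have "\<dots> = e ^ k"
    using finite_permutations[of "{0..<k}"] permutes_id[of "{0..<k}"] by (simp add: sum.delta')
  finally have "det (char_mat k e E) - e ^ k
      = (\<Sum>\<sigma>\<in>?S. signof \<sigma> * ((\<Prod>i=0..<k. char_mat k e E $$ (i, \<sigma> i)) - ?d \<sigma>))"
    using det_def'[of "char_mat k e E" k] by (simp add: char_mat_def right_diff_distrib sum_subtractf)
  also have "\<dots> \<in> I k"
  proof (rule sum_mem)
    fix \<sigma> assume "\<sigma> \<in> ?S"
    then have "(\<Prod>i=0..<k. char_mat k e E $$ (i, \<sigma> i)) - ?d \<sigma> \<in> I k"
      using char_mat_prod_mem[OF E, of \<sigma> k] by simp
    moreover have "signof \<sigma> * x \<in> I k" if "x \<in> I k" for x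
      using that uminus_mem by (simp add: sign_def)
    ultimately show "signof \<sigma> * ((\<Prod>i=0..<k. char_mat k e E $$ (i, \<sigma> i)) - ?d \<sigma>) \<in> I k"
      by blast
  qed
  finally show ?thesis .
qed

lemma det_trick:
  assumes "k \<ge> 1" "m 0 = 1" "\<forall>j<k. e * m j = (\<Sum>l<k. E j l * m l)" "\<forall>j<k. \<forall>l<k. E j l \<in> I 1"
  shows "e ^ k \<in> I k"
  using det_char_mat_minus_power_mem[OF assms(4)] det_char_mat_eq_0[OF assms(1-3)] uminus_mem by fastforce

end

section \<open>Prime ideals\<close>

definition is_ideal :: "'a::comm_ring_1 set \<Rightarrow> bool" where
  "is_ideal I \<longleftrightarrow> 0 \<in> I \<and> (\<forall>x\<in>I. \<forall>y\<in>I. x + y \<in> I) \<and> (\<forall>x\<in>I. \<forall>r. r * x \<in> I)"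

lemma ideal_0: "is_ideal I \<Longrightarrow> 0 \<in> I"
  by (simp add: is_ideal_def)

lemma ideal_add: "is_ideal I \<Longrightarrow> x \<in> I \<Longrightarrow> y \<in> I \<Longrightarrow> x + y \<in> I"
  by (simp add: is_ideal_def)

lemma ideal_mult_left: "is_ideal I \<Longrightarrow> x \<in> I \<Longrightarrow> r * x \<in> I"
  by (simp add: is_ideal_def)

lemma ideal_mult_right: "is_ideal I \<Longrightarrow> x \<in> I \<Longrightarrow> x * r \<in> I"
  by (metis ideal_mult_left mult.commute)

lemma ideal_uminus: "is_ideal I \<Longrightarrow> x \<in> I \<Longrightarrow> - x \<in> I"
  using ideal_mult_left[of I x "-1"] by simp

lemma ideal_diff: "is_ideal I \<Longrightarrow> x \<in> I \<Longrightarrow> y \<in> I \<Longrightarrow> x - y \<in> I"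
  by (metis diff_conv_add_uminus ideal_add ideal_uminus)

lemma ideal_sum: "is_ideal I \<Longrightarrow> (\<And>i. i \<in> F \<Longrightarrow> f i \<in> I) \<Longrightarrow> sum f F \<in> I"
  by (induction F rule: infinite_finite_induct) (auto intro: ideal_0 ideal_add)

lemma ideal_Union_chain:
  assumes "C \<noteq> {}" "chain\<^sub>\<subseteq> C" "\<forall>I\<in>C. is_ideal I"
  shows "is_ideal (\<Union>C)"
  unfolding is_ideal_def
proof (intro conjI ballI allI)
  obtain I where "I \<in> C"
    using assms(1) by blast
  then show "0 \<in> \<Union>C"
    using assms(3) ideal_0 by blast
next
  fix x y assume "x \<in> \<Union>C" "y \<in> \<Union>C"
  then obtain I where "I \<in> C" "x \<in> I" "y \<in> I"
    using chain_subset_common[OF assms(2)] by blast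
  then show "x + y \<in> \<Union>C"
    using assms(3) ideal_add by blast
next
  fix x r assume "x \<in> \<Union>C"
  then obtain I where "I \<in> C" "x \<in> I"
    by blast
  then show "r * x \<in> \<Union>C"
    using assms(3) ideal_mult_left by blast
qed

lemma ideal_insert:
  assumes I: "is_ideal I"
  shows "is_ideal {x + r * a | x r. x \<in> I}"
  unfolding is_ideal_def
proof (intro conjI ballI allI)
  show "0 \<in> {x + r * a | x r. x \<in> I}"
    using ideal_0[OF I] by (intro CollectI exI[of _ 0]) simp
next
  fix u v assume "u \<in> {x + r * a | x r. x \<in> I}" "v \<in> {x + r * a | x r. x \<in> I}"
  then obtain x1 r1 x2 r2 where "u = x1 + r1 * a" "v = x2 + r2 * a" "x1 \<in> I" "x2 \<in> I"
    by blast
  moreover have "u + v = (x1 + x2) + (r1 + r2) * a"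
    using calculation by (simp add: algebra_simps)
  ultimately show "u + v \<in> {x + r * a | x r. x \<in> I}"
    using ideal_add[OF I] by blast
next
  fix u s assume "u \<in> {x + r * a | x r. x \<in> I}"
  then obtain x1 r1 where "u = x1 + r1 * a" "x1 \<in> I"
    by blast
  moreover have "s * u = s * x1 + (s * r1) * a"
    using calculation by (simp add: algebra_simps)
  ultimately show "s * u \<in> {x + r * a | x r. x \<in> I}"
    using ideal_mult_left[OF I] by blast
qed

lemma prime_if_maximal_disjoint:
  assumes mult: "\<forall>a\<in>M. \<forall>b\<in>M. a * b \<in> M" and P: "is_ideal P" "P \<inter> M = {}"
    and max: "\<And>I. is_ideal I \<Longrightarrow> I \<inter> M = {} \<Longrightarrow> P \<subseteq> I \<Longrightarrow> I = P"
    and ab: "a * b \<in> P"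
  shows "a \<in> P \<or> b \<in> P"
proof -
  have meets: "\<exists>x\<in>P. \<exists>r. x + r * c \<in> M" if "c \<notin> P" for c
  proof (rule ccontr)
    let ?J = "{x + r * c | x r. x \<in> P}"
    assume "\<not> ?thesis"
    then have "?J \<inter> M = {}"
      by blast
    moreover have "P \<subseteq> ?J"
    proof
      fix x assume "x \<in> P"
      then show "x \<in> ?J"
        by (intro CollectI exI[of _ x] exI[of _ 0]) simp
    qed
    ultimately have "?J = P"
      using max ideal_insert[OF P(1), of c] by simp
    moreover have "c \<in> ?J"
      using ideal_0[OF P(1)] by (intro CollectI exI[of _ 0] exI[of _ 1]) simp
    ultimately show False
      using that by blast
  qed
  show ?thesis
  proof (rule ccontr)
    assume "\<not> (a \<in> P \<or> b \<in> P)"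
    then obtain x1 r1 x2 r2 where x: "x1 \<in> P" "x2 \<in> P" "x1 + r1 * a \<in> M" "x2 + r2 * b \<in> M"
      using meets by meson
    have "(x1 + r1 * a) * (x2 + r2 * b) = x1 * (x2 + r2 * b) + (r1 * a) * x2 + (r1 * r2) * (a * b)"
      by (simp add: algebra_simps)
    also have "\<dots> \<in> P"
      using ideal_add[OF P(1) ideal_add[OF P(1) ideal_mult_right[OF P(1) x(1)] ideal_mult_left[OF P(1) x(2)]]
          ideal_mult_left[OF P(1) ab]] .
    finally show False
      using mult x(3,4) P(2) by blast
  qed
qed

lemma exists_prime_ideal_disjoint:
  assumes "\<forall>a\<in>M. \<forall>b\<in>M. a * b \<in> M" and "0 \<notin> M"
  shows "\<exists>P. is_ideal P \<and> (\<forall>a b. a * b \<in> P \<longrightarrow> a \<in> P \<or> b \<in> P) \<and> P \<inter> M = {}"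
proof -
  let ?F = "{I. is_ideal I \<and> I \<inter> M = {}}"
  have zero: "{0} \<in> ?F"
    using \<open>0 \<notin> M\<close> by (simp add: is_ideal_def)
  have chain: "\<Union>C \<in> ?F" if "C \<subseteq> ?F" "chain\<^sub>\<subseteq> C" "C \<noteq> {}" for C
    using that ideal_Union_chain[of C] by blast
  obtain P where "P \<in> ?F" and max: "\<And>I. I \<in> ?F \<Longrightarrow> P \<subseteq> I \<Longrightarrow> I = P"
  proof (rule Zorn_above[OF zero chain])
    fix P assume "P \<in> ?F" "\<And>I. I \<in> ?F \<Longrightarrow> P \<subseteq> I \<Longrightarrow> I = P"
    then show thesis
      by (rule that)
  qed
  then have P: "is_ideal P" "P \<inter> M = {}"
    by simp_all
  then show ?thesis
    using prime_if_maximal_disjoint[OF assms(1) P] max by blast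
qed

section \<open>Conch subrings\<close>

lemma ideal_multiples_filtration:
  assumes W: "is_subring W" and y: "y \<in> W"
  shows "filtration (\<lambda>_. {y * w | w. w \<in> W}) 1"
proof
  fix a b and n m :: nat
  show "0 \<in> {y * w | w. w \<in> W}"
    using subring_0[OF W] by (intro CollectI exI[of _ 0]) simp
  assume "a \<in> {y * w | w. w \<in> W}"
  then obtain w1 where w1: "a = y * w1" "w1 \<in> W"
    by blast
  have "- a = y * (- w1)" "- w1 \<in> W"
    using w1 subring_uminus[OF W] by simp_all
  then show "- a \<in> {y * w | w. w \<in> W}"
    by blast
  show "1 * a \<in> {y * w | w. w \<in> W}"
    using w1 by auto
  assume "b \<in> {y * w | w. w \<in> W}"
  then obtain w2 where w2: "b = y * w2" "w2 \<in> W"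
    by blast
  have "a + b = y * (w1 + w2)" "a * b = y * (w1 * (y * w2))"
    unfolding w1(1) w2(1) by (simp_all add: algebra_simps)
  moreover have "w1 + w2 \<in> W" "w1 * (y * w2) \<in> W"
    using w1(2) w2(2) y W by (simp_all add: subring_add subring_mult)
  ultimately show "a + b \<in> {y * w | w. w \<in> W}" "a * b \<in> {y * w | w. w \<in> W}"
    by blast+
qed

text \<open>An element of \<open>W\<close> that becomes invertible in an integral extension \<open>W[z]\<close> is invertible in
  \<open>W\<close>: the inverse acts on the \<open>W\<close>-module \<open>W[z]\<close>, and the determinant trick for the ideal \<open>yW\<close>
  (Nakayama) gives \<open>1 \<in> yW\<close>.\<close>

lemma inverse_in_subring_if_in_integral_adjoin:
  assumes W: "is_subring W" and z: "integral_over W z"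
    and y: "y \<in> W" "x * y = 1" and x: "x \<in> adjoin W z"
  shows "x \<in> W"
proof -
  obtain K c where c: "\<forall>i<K. c i \<in> W" and rel: "z ^ K + (\<Sum>i<K. c i * z ^ i) = 0"
    using z unfolding integral_over_def by blast
  have K: "K \<ge> 1"
    using rel by (cases K) auto
  have "\<forall>j. \<exists>s. (\<forall>l<K. s l \<in> W) \<and> x * z ^ j = (\<Sum>l<K. s l * z ^ l)"
    using adjoin_mult_power_in_power_span[OF W K c rel x] by blast
  then obtain s where s: "\<forall>j. (\<forall>l<K. s j l \<in> W) \<and> x * z ^ j = (\<Sum>l<K. s j l * z ^ l)"
    by (rule choice[THEN exE])
  interpret filtration "\<lambda>_. {y * w | w. w \<in> W}" 1
    by (rule ideal_multiples_filtration[OF W y(1)])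
  have "\<forall>j<K. 1 * z ^ j = (\<Sum>l<K. (y * s j l) * z ^ l)"
  proof (intro allI impI)
    fix j
    have "1 * z ^ j = y * (x * z ^ j)"
      using y(2) by (simp add: mult.assoc[symmetric] mult.commute[of y])
    also have "\<dots> = (\<Sum>l<K. (y * s j l) * z ^ l)"
      using s by (simp add: sum_distrib_left mult.assoc)
    finally show "1 * z ^ j = (\<Sum>l<K. (y * s j l) * z ^ l)" .
  qed
  moreover have "\<forall>j<K. \<forall>l<K. y * s j l \<in> {y * w | w. w \<in> W}"
    using s by blast
  ultimately have "1 ^ K \<in> {y * w | w. w \<in> W}"
    by (rule det_trick[where m = "\<lambda>l. z ^ l" and E = "\<lambda>j l. y * s j l", OF K power_0])
  then obtain w where w: "1 = y * w" "w \<in> W"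
    by auto
  have "x = (x * y) * w"
    using w(1) by (metis mult.assoc mult_1_right)
  then show ?thesis
    using y(2) w(2) by simp
qed

lemma conch_integrally_closed:
  assumes "conches W x"
  shows "integrally_closed_in W"
  unfolding integrally_closed_in_def
proof (intro allI impI)
  fix z assume z: "integral_over W z"
  obtain y where y: "x * y = 1" "y \<in> W" "x \<notin> W" and W: "is_subring W"
    and max: "\<forall>S. is_subring S \<and> W \<subseteq> S \<and> y \<in> S \<and> x \<notin> S \<longrightarrow> S = W"
    using assms unfolding conches_def by blast
  show "z \<in> W"
  proof (rule ccontr)
    assume "z \<notin> W"
    then have "adjoin W z \<noteq> W"
      using gen_in_adjoin[OF W] by blast
    then have "x \<in> adjoin W z"
      using max adjoin_subring[OF W] subset_adjoin[OF W] y(2) by blast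
    then show False
      using inverse_in_subring_if_in_integral_adjoin[OF W z y(2,1)] y(3) by blast
  qed
qed

lemma exists_conch_above:
  assumes "is_subring V" "y \<in> V" "x \<notin> V" "x * y = 1"
  shows "\<exists>W. V \<subseteq> W \<and> conches W x"
proof -
  let ?F = "{S. is_subring S \<and> V \<subseteq> S \<and> x \<notin> S}"
  have chain: "\<Union>C \<in> ?F" if "C \<subseteq> ?F" "chain\<^sub>\<subseteq> C" "C \<noteq> {}" for C
  proof -
    have "is_subring (\<Union>C)"
      using subring_Union_chain[OF that(3,2)] that(1) by blast
    moreover have "V \<subseteq> \<Union>C" "x \<notin> \<Union>C"
      using that(1,3) by blast+
    ultimately show ?thesis
      by blast
  qed
  have "V \<in> ?F"
    using assms(1,3) by simp
  then obtain W where W: "W \<in> ?F" "V \<subseteq> W" and max: "\<And>S. S \<in> ?F \<Longrightarrow> W \<subseteq> S \<Longrightarrow> S = W"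
  proof (rule Zorn_above[OF _ chain])
    fix W assume "W \<in> ?F" "V \<subseteq> W" "\<And>S. S \<in> ?F \<Longrightarrow> W \<subseteq> S \<Longrightarrow> S = W"
    then show thesis
      by (rule that)
  qed
  have "conches W x"
    unfolding conches_def
  proof (intro exI conjI allI impI)
    show "x * y = 1" "is_subring W" "y \<in> W" "x \<notin> W"
      using W assms(2,4) by auto
  next
    fix S assume S: "is_subring S \<and> W \<subseteq> S \<and> y \<in> S \<and> x \<notin> S"
    then have "V \<subseteq> S"
      using W(2) by blast
    then show "S = W"
      using max[of S] S by simp
  qed
  then show ?thesis
    using W by blast
qed

text \<open>If every element becomes an element of \<open>W\<close> after multiplication by a power of \<open>y = 1/x\<close>, then
  \<open>W[x]\<close> is the whole ring, so every subring strictly above the \<open>x\<close>-conch subring \<open>W\<close> is improper.\<close>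

lemma conch_maximal_subring:
  assumes "conches W x" "x * y = 1" "\<forall>r. \<exists>n. y ^ n * r \<in> W"
  shows "maximal_subring W"
proof -
  obtain y' where y': "x * y' = 1" "y' \<in> W" "x \<notin> W" and W: "is_subring W"
    and max: "\<forall>S. is_subring S \<and> W \<subseteq> S \<and> y' \<in> S \<and> x \<notin> S \<longrightarrow> S = W"
    using assms(1) unfolding conches_def by blast
  have "y' = y"
    using y'(1) assms(2) by (metis mult.left_commute mult_1_right)
  have "S = UNIV" if S: "is_subring S" "W \<subseteq> S" "x \<in> S" for S
  proof -
    have "r \<in> S" for r
    proof -
      obtain n where "y ^ n * r \<in> W"
        using assms(3) by blast
      then have "x ^ n * (y ^ n * r) \<in> S"
        using subring_mult[OF S(1) subring_power[OF S(1) S(3)]] S(2) by blast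
      moreover have "x ^ n * (y ^ n * r) = r"
        using assms(2) by (simp add: mult.assoc[symmetric] power_mult_distrib[symmetric])
      ultimately show ?thesis
        by simp
    qed
    then show ?thesis
      by blast
  qed
  then show ?thesis
    unfolding maximal_subring_def using W y' max \<open>y' = y\<close> by blast
qed

section \<open>The \<open>p\<close>-adic order\<close>

locale p_adic =
  fixes D :: "'a::comm_ring_1 set" and p :: 'a
  assumes D_domain: "integral_domain_subring D"
    and p_prime: "prime_in D p"
    and Inter_p_powers: "\<forall>x. (\<forall>n::nat\<ge>1. \<exists>d\<in>D. x = p ^ n * d) \<longrightarrow> x = 0"
begin

lemma D_subring: "is_subring D"
  using D_domain unfolding integral_domain_subring_def by blast

lemma D_mult_nonzero: "a \<in> D \<Longrightarrow> b \<in> D \<Longrightarrow> a \<noteq> 0 \<Longrightarrow> b \<noteq> 0 \<Longrightarrow> a * b \<noteq> 0"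
  using D_domain unfolding integral_domain_subring_def by blast

lemma D_mult_cancel:
  assumes "a \<in> D" "b \<in> D" "c \<in> D" "a \<noteq> 0" "a * b = a * c"
  shows "b = c"
proof -
  have "a * (b - c) = 0"
    using assms(5) by (simp add: right_diff_distrib)
  then show ?thesis
    using D_mult_nonzero[OF assms(1) subring_diff[OF D_subring assms(2,3)] assms(4)] by auto
qed

lemma p_in_D: "p \<in> D" and p_nonzero: "p \<noteq> 0" and p_not_unit: "\<not> (\<exists>u\<in>D. p * u = 1)"
  using p_prime unfolding prime_in_def by blast+

definition p_dvd :: "'a \<Rightarrow> bool" where
  "p_dvd c \<longleftrightarrow> (\<exists>c'\<in>D. c = p * c')"

lemma p_dvd_mult: "a \<in> D \<Longrightarrow> b \<in> D \<Longrightarrow> p_dvd (a * b) \<Longrightarrow> p_dvd a \<or> p_dvd b"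
  using p_prime unfolding prime_in_def p_dvd_def by blast

lemma p_power_in_D: "p ^ n \<in> D"
  using subring_power[OF D_subring p_in_D] .

lemma p_power_nonzero: "p ^ n \<noteq> 0"
  by (induction n) (auto simp: D_mult_nonzero p_in_D p_nonzero p_power_in_D)

definition p_power_dvd :: "nat \<Rightarrow> 'a \<Rightarrow> bool" where
  "p_power_dvd n d \<longleftrightarrow> (\<exists>c\<in>D. d = p ^ n * c)"

definition ord :: "'a \<Rightarrow> nat" where
  "ord d = (GREATEST n. p_power_dvd n d)"

lemma p_power_dvd_bounded:
  assumes "d \<in> D" "d \<noteq> 0"
  shows "\<exists>B. \<forall>n. p_power_dvd n d \<longrightarrow> n \<le> B"
proof (rule ccontr)
  assume "\<not> ?thesis"
  then have unbounded: "\<exists>m. p_power_dvd m d \<and> n < m" for n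
    by (meson not_le)
  have "\<exists>c\<in>D. d = p ^ n * c" for n
  proof -
    obtain m c where "n < m" "c \<in> D" "d = p ^ m * c"
      using unbounded[of n] unfolding p_power_dvd_def by blast
    then have "d = p ^ n * (p ^ (m - n) * c)" "p ^ (m - n) * c \<in> D"
      using subring_mult[OF D_subring p_power_in_D]
      by (simp_all add: mult.assoc[symmetric] power_add[symmetric])
    then show ?thesis
      by blast
  qed
  then show False
    using Inter_p_powers assms(2) by blast
qed

lemma ord_dvd: "d \<in> D \<Longrightarrow> d \<noteq> 0 \<Longrightarrow> p_power_dvd (ord d) d"
  and ord_greatest: "d \<in> D \<Longrightarrow> d \<noteq> 0 \<Longrightarrow> p_power_dvd n d \<Longrightarrow> n \<le> ord d"
proof -
  assume d: "d \<in> D" "d \<noteq> 0"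
  then obtain B where B: "\<And>n. p_power_dvd n d \<Longrightarrow> n \<le> B"
    using p_power_dvd_bounded by blast
  have "p_power_dvd 0 d"
    using d unfolding p_power_dvd_def by auto
  then show "p_power_dvd (ord d) d"
    unfolding ord_def using GreatestI_nat[of "\<lambda>n. p_power_dvd n d", OF _ B] by simp
  show "p_power_dvd n d \<Longrightarrow> n \<le> ord d"
    unfolding ord_def using Greatest_le_nat[of "\<lambda>n. p_power_dvd n d", OF _ B] by simp
qed

lemma ord_factor:
  assumes "d \<in> D" "d \<noteq> 0"
  obtains c where "c \<in> D" "d = p ^ ord d * c" "\<not> p_dvd c"
proof -
  obtain c where c: "c \<in> D" "d = p ^ ord d * c"
    using ord_dvd[OF assms] unfolding p_power_dvd_def by blast
  have "\<not> p_dvd c"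
  proof
    assume "p_dvd c"
    then obtain c' where "c' \<in> D" "c = p * c'"
      unfolding p_dvd_def by blast
    moreover have "d = p ^ Suc (ord d) * c'"
      using c(2) \<open>c = p * c'\<close> by (simp add: mult_ac)
    ultimately have "p_power_dvd (Suc (ord d)) d"
      unfolding p_power_dvd_def by blast
    then show False
      using ord_greatest[OF assms] by fastforce
  qed
  then show thesis
    using c that by blast
qed

lemma ord_eqI:
  assumes c: "c \<in> D" "\<not> p_dvd c" and d: "d = p ^ n * c"
  shows "ord d = n"
proof -
  have "c \<noteq> 0"
  proof
    assume "c = 0"
    then have "c = p * 0" "(0::'a) \<in> D"
      using subring_0[OF D_subring] by simp_all
    then show False
      using c(2) unfolding p_dvd_def by blast
  qed
  then have dD: "d \<in> D" and d0: "d \<noteq> 0"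
    unfolding d using subring_mult[OF D_subring p_power_in_D c(1)] D_mult_nonzero[OF p_power_in_D c(1)]
      p_power_nonzero by auto
  have "n \<le> ord d"
    using ord_greatest[OF dD d0] d c(1) unfolding p_power_dvd_def by blast
  moreover have "\<not> n < ord d"
  proof
    assume lt: "n < ord d"
    obtain c' where c': "c' \<in> D" "d = p ^ ord d * c'"
      using ord_dvd[OF dD d0] unfolding p_power_dvd_def by blast
    have "p ^ ord d = p ^ n * (p * p ^ (ord d - n - 1))"
      using lt by (simp flip: power_add power_Suc)
    then have "p ^ n * c = p ^ n * (p * (p ^ (ord d - n - 1) * c'))"
      using c' d by (simp add: mult.assoc)
    moreover have "p ^ (ord d - n - 1) * c' \<in> D"
      using subring_mult[OF D_subring p_power_in_D c'(1)] .
    moreover have "p * (p ^ (ord d - n - 1) * c') \<in> D"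
      using subring_mult[OF D_subring p_in_D calculation(2)] .
    ultimately have "c = p * (p ^ (ord d - n - 1) * c')"
      using D_mult_cancel[OF p_power_in_D c(1) _ p_power_nonzero] by blast
    then show False
      using c(2) \<open>p ^ (ord d - n - 1) * c' \<in> D\<close> unfolding p_dvd_def by blast
  qed
  ultimately show ?thesis
    by simp
qed

lemma ord_mult:
  assumes "a \<in> D" "b \<in> D" "a \<noteq> 0" "b \<noteq> 0"
  shows "ord (a * b) = ord a + ord b"
proof -
  obtain a' where a': "a' \<in> D" "a = p ^ ord a * a'" "\<not> p_dvd a'"
    using ord_factor[OF assms(1,3)] by blast
  obtain b' where b': "b' \<in> D" "b = p ^ ord b * b'" "\<not> p_dvd b'"
    using ord_factor[OF assms(2,4)] by blast
  have "a * b = p ^ (ord a + ord b) * (a' * b')"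
    by (subst a'(2), subst b'(2)) (simp add: power_add mult_ac)
  moreover have "\<not> p_dvd (a' * b')"
    using p_dvd_mult a'(1,3) b'(1,3) by blast
  ultimately show ?thesis
    using ord_eqI subring_mult[OF D_subring a'(1) b'(1)] by blast
qed

lemma ord_add:
  assumes "a \<in> D" "b \<in> D" "a \<noteq> 0" "b \<noteq> 0" "a + b \<noteq> 0"
  shows "min (ord a) (ord b) \<le> ord (a + b)"
proof -
  let ?k = "min (ord a) (ord b)"
  obtain a' where a': "a' \<in> D" "a = p ^ ord a * a'"
    using ord_dvd[OF assms(1,3)] unfolding p_power_dvd_def by blast
  obtain b' where b': "b' \<in> D" "b = p ^ ord b * b'"
    using ord_dvd[OF assms(2,4)] unfolding p_power_dvd_def by blast
  have "p ^ ord a = p ^ ?k * p ^ (ord a - ?k)" "p ^ ord b = p ^ ?k * p ^ (ord b - ?k)"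
    by (simp_all flip: power_add)
  then have "a + b = p ^ ?k * (p ^ (ord a - ?k) * a' + p ^ (ord b - ?k) * b')"
    using a'(2) b'(2) by (simp add: distrib_left mult.assoc)
  moreover have "p ^ (ord a - ?k) * a' + p ^ (ord b - ?k) * b' \<in> D"
    using a'(1) b'(1) p_power_in_D D_subring by (simp add: subring_add subring_mult)
  ultimately have "p_power_dvd ?k (a + b)"
    unfolding p_power_dvd_def by blast
  then show ?thesis
    using ord_greatest subring_add[OF D_subring assms(1,2)] assms(5) by blast
qed

lemma ord_p: "ord p = 1"
proof -
  have "\<not> p_dvd 1"
    unfolding p_dvd_def using p_not_unit by (auto dest: sym)
  then show ?thesis
    using ord_eqI[OF subring_1[OF D_subring], of p 1] by simp
qed

lemma exists_prime_ideal_meeting_D_in_0: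
  "\<exists>P. is_ideal P \<and> (\<forall>a b. a * b \<in> P \<longrightarrow> a \<in> P \<or> b \<in> P) \<and> P \<inter> D = {0}"
proof -
  have "\<forall>a\<in>D - {0}. \<forall>b\<in>D - {0}. a * b \<in> D - {0}"
    using D_mult_nonzero subring_mult[OF D_subring] by simp
  then obtain P where "is_ideal P" "\<forall>a b. a * b \<in> P \<longrightarrow> a \<in> P \<or> b \<in> P" "P \<inter> (D - {0}) = {}"
    using exists_prime_ideal_disjoint[of "D - {0}"] by blast
  moreover have "0 \<in> P \<inter> D"
    using ideal_0[OF \<open>is_ideal P\<close>] subring_0[OF D_subring] by blast
  ultimately show ?thesis
    by blast
qed

end

section \<open>Valuations modulo a prime\<close>

locale p_adic_mod = p_adic +
  fixes P :: "'a set"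
  assumes P_ideal: "is_ideal P"
    and P_prime: "a * b \<in> P \<Longrightarrow> a \<in> P \<or> b \<in> P"
    and P_inter_D: "P \<inter> D = {0}"
begin

lemma p_notin_P: "p \<notin> P"
  using P_inter_D p_in_D p_nonzero by blast

lemma one_notin_P: "1 \<notin> P"
proof
  assume "1 \<in> P"
  then have "1 \<in> P \<inter> D"
    using subring_1[OF D_subring] by simp
  then show False
    using P_inter_D by simp
qed

lemma mult_notin_P: "a \<notin> P \<Longrightarrow> b \<notin> P \<Longrightarrow> a * b \<notin> P"
  using P_prime by blast

lemma power_notin_P: "a \<notin> P \<Longrightarrow> a ^ n \<notin> P"
  by (induction n) (auto simp: one_notin_P mult_notin_P)

lemma add_notin_P: "a \<notin> P \<Longrightarrow> b \<in> P \<Longrightarrow> a + b \<notin> P"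
  using ideal_diff[OF P_ideal, of "a + b" b] by auto

lemma uminus_notin_P: "a \<notin> P \<Longrightarrow> - a \<notin> P"
  using ideal_uminus[OF P_ideal, of "- a"] by auto

text \<open>Valuations are taken modulo \<open>P\<close>: the elements of \<open>P\<close> have infinite value, which is encoded by
  excluding them from all conditions and giving them the junk value \<open>0\<close>.\<close>

definition valuation_on :: "'a set \<Rightarrow> ('a \<Rightarrow> nat) \<Rightarrow> bool" where
  "valuation_on A v \<longleftrightarrow> is_subring A \<and> P \<subseteq> A \<and> D \<subseteq> A \<and> (\<forall>a\<in>P. v a = 0) \<and> v p = 1 \<and>
     (\<forall>a\<in>A. \<forall>b\<in>A. a \<notin> P \<longrightarrow> b \<notin> P \<longrightarrow> v (a * b) = v a + v b) \<and>
     (\<forall>a\<in>A. \<forall>b\<in>A. a \<notin> P \<longrightarrow> b \<notin> P \<longrightarrow> a + b \<notin> P \<longrightarrow> min (v a) (v b) \<le> v (a + b)) \<and>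
     (\<forall>a\<in>A. \<forall>b\<in>A. a \<notin> P \<longrightarrow> a - b \<in> P \<longrightarrow> v a = v b)"

definition val_ge :: "('a \<Rightarrow> nat) \<Rightarrow> nat \<Rightarrow> 'a \<Rightarrow> bool" where
  "val_ge v \<theta> a \<longleftrightarrow> a \<in> P \<or> \<theta> \<le> v a"

definition val_gt :: "('a \<Rightarrow> nat) \<Rightarrow> nat \<Rightarrow> 'a \<Rightarrow> bool" where
  "val_gt v \<theta> a \<longleftrightarrow> a \<in> P \<or> \<theta> < v a"

definition transcendental_mod :: "'a set \<Rightarrow> 'a \<Rightarrow> bool" where
  "transcendental_mod A r \<longleftrightarrow> (\<forall>g. (\<forall>i. coeff g i \<in> A) \<longrightarrow> poly g r \<in> P \<longrightarrow> (\<forall>i. coeff g i \<in> P))"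

definition D_plus_P :: "'a set" where
  "D_plus_P = {x. \<exists>d\<in>D. x - d \<in> P}"

definition D_part :: "'a \<Rightarrow> 'a" where
  "D_part x = (THE d. d \<in> D \<and> x - d \<in> P)"

definition ord_mod :: "'a \<Rightarrow> nat" where
  "ord_mod x = (if x \<in> P then 0 else ord (D_part x))"

lemma D_part_eq:
  assumes "d \<in> D" "x - d \<in> P"
  shows "D_part x = d"
  unfolding D_part_def
proof (rule the_equality)
  fix d' assume d': "d' \<in> D \<and> x - d' \<in> P"
  have "d - d' = (x - d') - (x - d)"
    by simp
  also have "\<dots> \<in> P"
    using assms(2) d' ideal_diff[OF P_ideal] by blast
  finally have "d - d' \<in> P \<inter> D"
    using subring_diff[OF D_subring assms(1)] d' by blast
  then show "d' = d"
    using P_inter_D by simp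
qed (use assms in blast)

lemma D_part: "x \<in> D_plus_P \<Longrightarrow> D_part x \<in> D \<and> x - D_part x \<in> P"
  unfolding D_plus_P_def using D_part_eq by blast

lemma D_part_nonzero: "x \<in> D_plus_P \<Longrightarrow> x \<notin> P \<Longrightarrow> D_part x \<noteq> 0"
  using D_part by force

lemma D_part_add:
  assumes "x \<in> D_plus_P" "y \<in> D_plus_P"
  shows "x + y \<in> D_plus_P \<and> D_part (x + y) = D_part x + D_part y"
proof -
  have "(x + y) - (D_part x + D_part y) = (x - D_part x) + (y - D_part y)"
    by simp
  also have "\<dots> \<in> P"
    using D_part[OF assms(1)] D_part[OF assms(2)] ideal_add[OF P_ideal] by blast
  finally have "(x + y) - (D_part x + D_part y) \<in> P" .
  moreover have "D_part x + D_part y \<in> D"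
    using D_part[OF assms(1)] D_part[OF assms(2)] subring_add[OF D_subring] by blast
  ultimately show ?thesis
    unfolding D_plus_P_def using D_part_eq by blast
qed

lemma D_part_mult:
  assumes "x \<in> D_plus_P" "y \<in> D_plus_P"
  shows "x * y \<in> D_plus_P \<and> D_part (x * y) = D_part x * D_part y"
proof -
  have "x * y - D_part x * D_part y = (x - D_part x) * y + D_part x * (y - D_part y)"
    by (simp add: algebra_simps)
  also have "\<dots> \<in> P"
    using D_part[OF assms(1)] D_part[OF assms(2)]
      ideal_add[OF P_ideal ideal_mult_right[OF P_ideal] ideal_mult_left[OF P_ideal]] by blast
  finally have "x * y - D_part x * D_part y \<in> P" .
  moreover have "D_part x * D_part y \<in> D"
    using D_part[OF assms(1)] D_part[OF assms(2)] subring_mult[OF D_subring] by blast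
  ultimately show ?thesis
    unfolding D_plus_P_def using D_part_eq by blast
qed

lemma D_plus_P_subring: "is_subring D_plus_P"
  unfolding is_subring_def
proof (intro conjI ballI)
  show "1 \<in> D_plus_P"
    unfolding D_plus_P_def using subring_1[OF D_subring] ideal_0[OF P_ideal] by force
next
  fix x y assume "x \<in> D_plus_P" "y \<in> D_plus_P"
  then show "x + y \<in> D_plus_P" "x * y \<in> D_plus_P"
    using D_part_add D_part_mult by blast+
next
  fix x assume "x \<in> D_plus_P"
  then obtain d where d: "d \<in> D" "x - d \<in> P"
    unfolding D_plus_P_def by blast
  have "- x - (- d) = - (x - d)"
    by simp
  then have "- x - (- d) \<in> P"
    using ideal_uminus[OF P_ideal d(2)] by simp
  then show "- x \<in> D_plus_P"
    unfolding D_plus_P_def using subring_uminus[OF D_subring d(1)] by blast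
qed

lemma valuation_on_D_plus_P: "valuation_on D_plus_P ord_mod"
  unfolding valuation_on_def
proof (intro conjI ballI impI)
  show "P \<subseteq> D_plus_P" "D \<subseteq> D_plus_P"
    unfolding D_plus_P_def using subring_0[OF D_subring] ideal_0[OF P_ideal] by force+
  show "ord_mod p = 1"
    using D_part_eq[of p p] p_in_D ideal_0[OF P_ideal] p_notin_P ord_p by (simp add: ord_mod_def)
next
  fix a b assume ab: "a \<in> D_plus_P" "b \<in> D_plus_P" "a \<notin> P" "b \<notin> P"
  then show "ord_mod (a * b) = ord_mod a + ord_mod b"
    using ord_mult D_part D_part_nonzero D_part_mult mult_notin_P by (simp add: ord_mod_def)
  assume "a + b \<notin> P"
  moreover have "a + b \<in> D_plus_P" "D_part (a + b) = D_part a + D_part b"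
    using D_part_add[OF ab(1,2)] by blast+
  ultimately have "D_part a + D_part b \<noteq> 0"
    using D_part_nonzero[of "a + b"] by simp
  then show "min (ord_mod a) (ord_mod b) \<le> ord_mod (a + b)"
    using ab \<open>a + b \<notin> P\<close> \<open>D_part (a + b) = D_part a + D_part b\<close>
      ord_add[of "D_part a" "D_part b"] D_part D_part_nonzero by (simp add: ord_mod_def)
next
  fix a b assume ab: "a \<in> D_plus_P" "b \<in> D_plus_P" "a \<notin> P" "a - b \<in> P"
  have "b - D_part a = (a - D_part a) - (a - b)"
    by simp
  also have "\<dots> \<in> P"
    using ideal_diff[OF P_ideal _ ab(4)] D_part[OF ab(1)] by blast
  finally have "D_part b = D_part a"
    using D_part_eq D_part[OF ab(1)] by blast
  moreover have "b \<notin> P"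
    using add_notin_P[OF ab(3) ideal_uminus[OF P_ideal ab(4)]] by simp
  ultimately show "ord_mod a = ord_mod b"
    using ab(3) by (simp add: ord_mod_def)
qed (auto simp: D_plus_P_subring ord_mod_def)

end

locale valuation = p_adic_mod +
  fixes A :: "'a set" and v :: "'a \<Rightarrow> nat"
  assumes valuation_on: "valuation_on A v"
begin

lemma A_subring: "is_subring A"
  and P_subset_A: "P \<subseteq> A"
  and D_subset_A: "D \<subseteq> A"
  and v_P: "a \<in> P \<Longrightarrow> v a = 0"
  and v_p: "v p = 1"
  and v_mult: "a \<in> A \<Longrightarrow> b \<in> A \<Longrightarrow> a \<notin> P \<Longrightarrow> b \<notin> P \<Longrightarrow> v (a * b) = v a + v b"
  and v_add: "a \<in> A \<Longrightarrow> b \<in> A \<Longrightarrow> a \<notin> P \<Longrightarrow> b \<notin> P \<Longrightarrow> a + b \<notin> P \<Longrightarrow> min (v a) (v b) \<le> v (a + b)"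
  using valuation_on unfolding valuation_on_def by blast+

lemma v_cong: "a \<in> A \<Longrightarrow> b \<in> A \<Longrightarrow> a - b \<in> P \<Longrightarrow> v a = v b"
proof (cases "a \<in> P")
  case True
  assume "a - b \<in> P"
  then have "b \<in> P"
    using ideal_diff[OF P_ideal True \<open>a - b \<in> P\<close>] by simp
  then show ?thesis
    using True v_P by simp
next
  case False
  assume "a \<in> A" "b \<in> A" "a - b \<in> P"
  then show ?thesis
    using False valuation_on unfolding valuation_on_def by blast
qed

lemma p_in_A: "p \<in> A"
  using D_subset_A p_in_D by blast

lemma v_1: "v 1 = 0"
  using v_mult[OF subring_1[OF A_subring] subring_1[OF A_subring] one_notin_P one_notin_P] by simp

lemma v_uminus:
  assumes "a \<in> A"
  shows "v (- a) = v a"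
proof (cases "a \<in> P")
  case True
  then show ?thesis
    using v_P ideal_uminus[OF P_ideal] by simp
next
  case False
  have m1: "- 1 \<in> A" "- 1 \<notin> P"
    using subring_uminus[OF A_subring subring_1[OF A_subring]] uminus_notin_P[OF one_notin_P] by simp_all
  have "v (- 1) = 0"
    using v_mult[OF m1(1) m1(1) m1(2) m1(2)] v_1 by simp
  then show ?thesis
    using v_mult[OF m1(1) assms m1(2) False] by simp
qed

lemma v_power: "a \<in> A \<Longrightarrow> a \<notin> P \<Longrightarrow> v (a ^ n) = n * v a"
  by (induction n) (simp_all add: v_1 v_mult subring_power[OF A_subring] power_notin_P)

lemma val_ge_add:
  assumes "a \<in> A" "b \<in> A" "val_ge v \<theta> a" "val_ge v \<theta> b"
  shows "val_ge v \<theta> (a + b)"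
proof -
  have ab: "a + b \<in> A"
    using subring_add[OF A_subring assms(1,2)] .
  consider "a + b \<in> P" | "a \<in> P" "a + b \<notin> P" | "b \<in> P" "a + b \<notin> P" | "a \<notin> P" "b \<notin> P" "a + b \<notin> P"
    by blast
  then show ?thesis
  proof cases
    case 1
    then show ?thesis
      by (simp add: val_ge_def)
  next
    case 2
    then have "v (a + b) = v b" "b \<notin> P"
      using v_cong[OF ab assms(2)] ideal_add[OF P_ideal 2(1)] by auto
    then show ?thesis
      using assms(4) 2(2) by (simp add: val_ge_def)
  next
    case 3
    then have "v (a + b) = v a" "a \<notin> P"
      using v_cong[OF ab assms(1)] ideal_add[OF P_ideal _ 3(1)] by auto
    then show ?thesis
      using assms(3) 3(2) by (simp add: val_ge_def)
  next
    case 4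
    then show ?thesis
      using v_add[OF assms(1,2) 4] assms(3,4) by (simp add: val_ge_def)
  qed
qed

lemma val_gt_iff_val_ge_Suc: "val_gt v \<theta> a \<longleftrightarrow> val_ge v (Suc \<theta>) a"
  unfolding val_gt_def val_ge_def by auto

lemma val_gt_add: "a \<in> A \<Longrightarrow> b \<in> A \<Longrightarrow> val_gt v \<theta> a \<Longrightarrow> val_gt v \<theta> b \<Longrightarrow> val_gt v \<theta> (a + b)"
  using val_ge_add unfolding val_gt_iff_val_ge_Suc .

lemma val_ge_sum:
  "finite F \<Longrightarrow> \<forall>i\<in>F. f i \<in> A \<and> val_ge v \<theta> (f i) \<Longrightarrow> val_ge v \<theta> (sum f F) \<and> sum f F \<in> A"
proof (induction F rule: finite_induct)
  case empty
  then show ?case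
    using ideal_0[OF P_ideal] subring_0[OF A_subring] by (simp add: val_ge_def)
next
  case (insert x F)
  then show ?case
    using val_ge_add subring_add[OF A_subring] by simp
qed

lemma val_gt_sum:
  "finite F \<Longrightarrow> \<forall>i\<in>F. f i \<in> A \<and> val_gt v \<theta> (f i) \<Longrightarrow> val_gt v \<theta> (sum f F) \<and> sum f F \<in> A"
  using val_ge_sum unfolding val_gt_iff_val_ge_Suc .

lemma val_ge_mult:
  assumes "a \<in> A" "b \<in> A" "val_ge v \<theta> a" "val_ge v \<theta>' b"
  shows "val_ge v (\<theta> + \<theta>') (a * b)"
proof (cases "a \<in> P \<or> b \<in> P")
  case True
  then have "a * b \<in> P"
    using ideal_mult_left[OF P_ideal, of b a] ideal_mult_right[OF P_ideal, of a b] by blast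
  then show ?thesis
    by (simp add: val_ge_def)
next
  case False
  then show ?thesis
    using v_mult assms by (auto simp: val_ge_def)
qed

lemma val_gt_mult: "a \<in> A \<Longrightarrow> b \<in> A \<Longrightarrow> val_gt v \<theta> a \<Longrightarrow> val_ge v \<theta>' b \<Longrightarrow> val_gt v (\<theta> + \<theta>') (a * b)"
  using val_ge_mult[of a b "Suc \<theta>" \<theta>'] unfolding val_gt_iff_val_ge_Suc by simp

lemma val_ge_mono: "val_ge v \<theta> a \<Longrightarrow> \<theta>' \<le> \<theta> \<Longrightarrow> val_ge v \<theta>' a"
  by (auto simp: val_ge_def)

lemma val_ge_self: "val_ge v (v a) a"
  by (simp add: val_ge_def)

lemma v_add_val_gt:
  assumes t: "t \<in> A" "t \<notin> P" and r: "r \<in> A" "val_gt v (v t) r"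
  shows "t + r \<notin> P \<and> v (t + r) = v t"
proof (cases "r \<in> P")
  case True
  then show ?thesis
    using add_notin_P[OF t(2)] v_cong[OF subring_add[OF A_subring t(1) r(1)] t(1)] by simp
next
  case False
  have tr: "t + r \<in> A" "- r \<in> A" "- r \<notin> P"
    using subring_add[OF A_subring t(1) r(1)] subring_uminus[OF A_subring r(1)] uminus_notin_P[OF False] by simp_all
  have lt: "v t < v r"
    using r(2) False by (simp add: val_gt_def)
  have nP: "t + r \<notin> P"
  proof
    assume "t + r \<in> P"
    then have "v t = v (- r)"
      using v_cong[OF t(1) tr(2)] by simp
    then show False
      using v_uminus[OF r(1)] lt by simp
  qed
  have "min (v (t + r)) (v (- r)) \<le> v t"
    using v_add[OF tr(1,2) nP tr(3)] t(2) by simp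
  then have "v (t + r) \<le> v t"
    using lt v_uminus[OF r(1)] by linarith
  moreover have "v t \<le> v (t + r)"
    using v_add[OF t(1) r(1) t(2) False nP] lt by simp
  ultimately show ?thesis
    using nP by simp
qed

end

section \<open>Gauss extensions\<close>

context valuation
begin

definition coeff_vals :: "'a poly \<Rightarrow> nat set" where
  "coeff_vals g = {v (coeff g i) | i. coeff g i \<notin> P}"

definition gauss_val :: "'a poly \<Rightarrow> nat" where
  "gauss_val g = Min (coeff_vals g)"

lemma finite_coeff_vals: "finite (coeff_vals g)"
proof -
  have "coeff_vals g \<subseteq> (\<lambda>i. v (coeff g i)) ` {..degree g}"
  proof
    fix x assume "x \<in> coeff_vals g"
    then obtain i where i: "x = v (coeff g i)" "coeff g i \<notin> P"
      unfolding coeff_vals_def by blast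
    then have "coeff g i \<noteq> 0"
      using ideal_0[OF P_ideal] by auto
    then have "i \<le> degree g"
      by (rule le_degree)
    then show "x \<in> (\<lambda>i. v (coeff g i)) ` {..degree g}"
      using i(1) by blast
  qed
  then show ?thesis
    by (rule finite_subset) simp
qed

lemma gauss_val_le: "coeff g i \<notin> P \<Longrightarrow> gauss_val g \<le> v (coeff g i)"
  unfolding gauss_val_def
  by (rule Min_le[OF finite_coeff_vals]) (auto simp: coeff_vals_def)

lemma val_ge_gauss_val: "val_ge v (gauss_val g) (coeff g i)"
  using gauss_val_le by (auto simp: val_ge_def)

lemma gauss_val_attained:
  assumes "\<exists>i. coeff g i \<notin> P"
  shows "\<exists>i. coeff g i \<notin> P \<and> v (coeff g i) = gauss_val g"
proof -
  have "coeff_vals g \<noteq> {}"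
    using assms unfolding coeff_vals_def by blast
  then have "gauss_val g \<in> coeff_vals g"
    unfolding gauss_val_def using Min_in[OF finite_coeff_vals] by blast
  then show ?thesis
    unfolding coeff_vals_def by auto
qed

lemma gauss_val_const:
  assumes "a \<notin> P"
  shows "gauss_val [:a:] = v a"
proof -
  have "coeff [:a:] i \<notin> P \<longleftrightarrow> i = 0" for i
    using assms ideal_0[OF P_ideal] by (cases i) auto
  then have "coeff_vals [:a:] = {v a}"
    unfolding coeff_vals_def by auto
  then show ?thesis
    unfolding gauss_val_def by simp
qed

lemma coeff_notin_P_if_poly_notin_P:
  assumes "poly g r \<notin> P"
  shows "\<exists>i. coeff g i \<notin> P"
proof (rule ccontr)
  assume "\<not> ?thesis"
  then have "poly g r \<in> P"
    unfolding poly_altdef by (intro ideal_sum[OF P_ideal] ideal_mult_right[OF P_ideal]) simp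
  then show False
    using assms by blast
qed

definition min_index :: "'a poly \<Rightarrow> nat" where
  "min_index f = (LEAST i. coeff f i \<notin> P \<and> v (coeff f i) = gauss_val f)"

lemma min_index:
  "\<exists>i. coeff f i \<notin> P \<Longrightarrow> coeff f (min_index f) \<notin> P \<and> v (coeff f (min_index f)) = gauss_val f"
  unfolding min_index_def by (rule LeastI_ex[OF gauss_val_attained])

lemma val_gt_below_min_index:
  assumes "i < min_index f"
  shows "val_gt v (gauss_val f) (coeff f i)"
proof (cases "coeff f i \<in> P")
  case False
  then have "v (coeff f i) \<noteq> gauss_val f"
    using not_less_Least[OF assms[unfolded min_index_def]] by blast
  then show ?thesis
    using gauss_val_le[OF False] by (simp add: val_gt_def)
qed (simp add: val_gt_def)

lemma coeff_mult_val_ge: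
  assumes f: "\<forall>i. coeff f i \<in> A" and g: "\<forall>i. coeff g i \<in> A"
  shows "val_ge v (gauss_val f + gauss_val g) (coeff (f * g) n)"
proof -
  have "coeff f i * coeff g (n - i) \<in> A \<and>
      val_ge v (gauss_val f + gauss_val g) (coeff f i * coeff g (n - i))" for i
    using subring_mult[OF A_subring f[rule_format] g[rule_format]]
      val_ge_mult[OF f[rule_format] g[rule_format] val_ge_gauss_val val_ge_gauss_val] by simp
  then show ?thesis
    unfolding coeff_mult using val_ge_sum[of "{..n}"] by simp
qed

text \<open>In the coefficient of \<open>X^(i0 + j0)\<close> of \<open>f * g\<close>, where \<open>i0\<close>, \<open>j0\<close> are the first indices of minimal
  value, all products except \<open>coeff f i0 * coeff g j0\<close> have strictly larger value.\<close>

lemma coeff_mult_at_min_indices: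
  assumes f: "\<forall>i. coeff f i \<in> A" and g: "\<forall>i. coeff g i \<in> A"
    and fP: "\<exists>i. coeff f i \<notin> P" and gP: "\<exists>i. coeff g i \<notin> P"
  defines "n \<equiv> min_index f + min_index g"
  shows "coeff (f * g) n \<notin> P \<and> v (coeff (f * g) n) = gauss_val f + gauss_val g"
proof -
  let ?i0 = "min_index f" and ?j0 = "min_index g"
  let ?t = "\<lambda>i. coeff f i * coeff g (n - i)"
  have t_in: "?t i \<in> A" for i
    using f g subring_mult[OF A_subring] by blast
  have t0: "?t ?i0 \<notin> P" "v (?t ?i0) = gauss_val f + gauss_val g"
    using min_index[OF fP] min_index[OF gP] mult_notin_P v_mult f g unfolding n_def by auto
  have "val_gt v (gauss_val f + gauss_val g) (?t i)" if "i \<in> {..n} - {?i0}" for i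
  proof (cases "i < ?i0")
    case True
    then show ?thesis
      using val_gt_mult[OF f[rule_format] g[rule_format] val_gt_below_min_index[OF True] val_ge_gauss_val] by simp
  next
    case False
    then have "n - i < ?j0"
      using that unfolding n_def by auto
    then have "val_gt v (gauss_val g + gauss_val f) (coeff g (n - i) * coeff f i)"
      using val_gt_mult[OF g[rule_format] f[rule_format] val_gt_below_min_index val_ge_gauss_val] by simp
    then show ?thesis
      by (simp add: mult.commute add.commute)
  qed
  then have "val_gt v (v (?t ?i0)) (\<Sum>i\<in>{..n} - {?i0}. ?t i)" "(\<Sum>i\<in>{..n} - {?i0}. ?t i) \<in> A"
    using val_gt_sum[of "{..n} - {?i0}" ?t] t_in t0(2) by auto
  moreover have "coeff (f * g) n = ?t ?i0 + (\<Sum>i\<in>{..n} - {?i0}. ?t i)"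
    unfolding coeff_mult by (subst sum.remove[of _ ?i0]) (auto simp: n_def)
  ultimately show ?thesis
    using v_add_val_gt[OF t_in t0(1)] t0(2) by simp
qed

lemma gauss_val_mult:
  assumes f: "\<forall>i. coeff f i \<in> A" and g: "\<forall>i. coeff g i \<in> A"
    and fP: "\<exists>i. coeff f i \<notin> P" and gP: "\<exists>i. coeff g i \<notin> P"
  shows "(\<exists>i. coeff (f * g) i \<notin> P) \<and> gauss_val (f * g) = gauss_val f + gauss_val g"
proof -
  let ?n = "min_index f + min_index g"
  have n: "coeff (f * g) ?n \<notin> P" "v (coeff (f * g) ?n) = gauss_val f + gauss_val g"
    using coeff_mult_at_min_indices[OF assms] by simp_all
  have "gauss_val (f * g) = gauss_val f + gauss_val g"
    unfolding gauss_val_def[of "f * g"]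
  proof (rule Min_eqI[OF finite_coeff_vals])
    fix y assume "y \<in> coeff_vals (f * g)"
    then show "gauss_val f + gauss_val g \<le> y"
      using coeff_mult_val_ge[OF f g] unfolding coeff_vals_def val_ge_def by blast
  next
    show "gauss_val f + gauss_val g \<in> coeff_vals (f * g)"
      using n unfolding coeff_vals_def by (intro CollectI exI[of _ ?n]) simp
  qed
  then show ?thesis
    using n(1) by blast
qed

lemma gauss_val_add:
  assumes f: "\<forall>i. coeff f i \<in> A" and g: "\<forall>i. coeff g i \<in> A"
    and fgP: "\<exists>i. coeff (f + g) i \<notin> P"
  shows "min (gauss_val f) (gauss_val g) \<le> gauss_val (f + g)"
proof -
  obtain i where "coeff (f + g) i \<notin> P" "v (coeff (f + g) i) = gauss_val (f + g)"
    using gauss_val_attained[OF fgP] by blast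
  moreover have "val_ge v (min (gauss_val f) (gauss_val g)) (coeff (f + g) i)"
    using val_ge_add[OF _ _ val_ge_mono[OF val_ge_gauss_val] val_ge_mono[OF val_ge_gauss_val]] f g by simp
  ultimately show ?thesis
    unfolding val_ge_def by simp
qed

end

text \<open>Gauss extension of a valuation to \<open>A[r]\<close> for \<open>r\<close> transcendental over \<open>A\<close> modulo \<open>P\<close>: the value
  of \<open>g(r)\<close> is the least value of a coefficient of \<open>g\<close>.\<close>

locale gauss_extension = valuation +
  fixes r :: 'a
  assumes transcendental: "transcendental_mod A r"
begin

lemma coeff_vals_cong:
  assumes f: "\<forall>i. coeff f i \<in> A" and g: "\<forall>i. coeff g i \<in> A" and fg: "poly f r - poly g r \<in> P"
  shows "coeff_vals f = coeff_vals g"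
proof -
  have "\<forall>i. coeff (f - g) i \<in> A"
    using f g subring_diff[OF A_subring] by simp
  then have d: "coeff f i - coeff g i \<in> P" for i
    using transcendental[unfolded transcendental_mod_def, rule_format, of "f - g"] fg by simp
  have iff: "coeff f i \<notin> P \<longleftrightarrow> coeff g i \<notin> P" for i
    using ideal_add[OF P_ideal d[of i], of "coeff g i"] ideal_diff[OF P_ideal _ d[of i], of "coeff f i"] by auto
  have eq: "v (coeff f i) = v (coeff g i)" for i
    using v_cong[OF f[rule_format] g[rule_format] d] .
  show ?thesis
    unfolding coeff_vals_def by (simp only: iff eq)
qed

definition ext_val :: "'a \<Rightarrow> nat" where
  "ext_val x = (if x \<in> P then 0 else gauss_val (SOME g. (\<forall>i. coeff g i \<in> A) \<and> poly g r = x))"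

lemma ext_val_poly:
  assumes g: "\<forall>i. coeff g i \<in> A" and "poly g r \<notin> P"
  shows "ext_val (poly g r) = gauss_val g"
proof -
  define g' where "g' = (SOME g'. (\<forall>i. coeff g' i \<in> A) \<and> poly g' r = poly g r)"
  have g': "\<forall>i. coeff g' i \<in> A" "poly g' r = poly g r"
    unfolding g'_def using someI_ex[of "\<lambda>g'. (\<forall>i. coeff g' i \<in> A) \<and> poly g' r = poly g r"] g by blast+
  then have "coeff_vals g' = coeff_vals g"
    using coeff_vals_cong[OF g'(1) g] ideal_0[OF P_ideal] by simp
  then show ?thesis
    unfolding ext_val_def g'_def[symmetric] gauss_val_def using assms(2) by simp
qed

lemma ext_val_restrict:
  assumes "a \<in> A"
  shows "ext_val a = v a"
proof (cases "a \<in> P")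
  case False
  then show ?thesis
    using ext_val_poly[OF coeff_const_in_subring[OF A_subring assms]] gauss_val_const by simp
qed (simp add: ext_val_def v_P)

lemma ext_val_mult:
  assumes "a \<in> adjoin A r" "b \<in> adjoin A r" "a \<notin> P" "b \<notin> P"
  shows "ext_val (a * b) = ext_val a + ext_val b"
proof -
  obtain f g where f: "\<forall>i. coeff f i \<in> A" "a = poly f r" and g: "\<forall>i. coeff g i \<in> A" "b = poly g r"
    using assms(1,2) unfolding adjoin_def by blast
  have "ext_val (a * b) = gauss_val (f * g)"
    using ext_val_poly[OF coeff_mult_in_subring[OF A_subring f(1) g(1)]] mult_notin_P[OF assms(3,4)] f g by simp
  also have "\<dots> = gauss_val f + gauss_val g"
    using gauss_val_mult[OF f(1) g(1) coeff_notin_P_if_poly_notin_P coeff_notin_P_if_poly_notin_P, of r r]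
      assms(3,4) f(2) g(2) by simp
  finally show ?thesis
    using ext_val_poly f g assms(3,4) by simp
qed

lemma ext_val_add:
  assumes "a \<in> adjoin A r" "b \<in> adjoin A r" "a \<notin> P" "b \<notin> P" "a + b \<notin> P"
  shows "min (ext_val a) (ext_val b) \<le> ext_val (a + b)"
proof -
  obtain f g where f: "\<forall>i. coeff f i \<in> A" "a = poly f r" and g: "\<forall>i. coeff g i \<in> A" "b = poly g r"
    using assms(1,2) unfolding adjoin_def by blast
  have fg: "\<forall>i. coeff (f + g) i \<in> A" "poly (f + g) r \<notin> P"
    using f g assms(5) subring_add[OF A_subring] by simp_all
  have "ext_val (a + b) = gauss_val (f + g)"
    using ext_val_poly[OF fg] f g by simp
  then show ?thesis
    using gauss_val_add[OF f(1) g(1) coeff_notin_P_if_poly_notin_P[OF fg(2)]] ext_val_poly f g assms(3,4) by simp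
qed

lemma ext_val_cong:
  assumes "a \<in> adjoin A r" "b \<in> adjoin A r" "a \<notin> P" "a - b \<in> P"
  shows "ext_val a = ext_val b"
proof -
  obtain f g where f: "\<forall>i. coeff f i \<in> A" "a = poly f r" and g: "\<forall>i. coeff g i \<in> A" "b = poly g r"
    using assms(1,2) unfolding adjoin_def by blast
  have "b \<notin> P"
    using add_notin_P[OF assms(3) ideal_uminus[OF P_ideal assms(4)]] by simp
  moreover have "coeff_vals f = coeff_vals g"
    using coeff_vals_cong[OF f(1) g(1)] assms(4) f g by simp
  ultimately show ?thesis
    using ext_val_poly f g assms(3) unfolding gauss_val_def by simp
qed

lemma valuation_on_adjoin: "valuation_on (adjoin A r) ext_val"
  unfolding valuation_on_def
proof (intro conjI ballI impI)
  show "is_subring (adjoin A r)"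
    using adjoin_subring[OF A_subring] .
  show "P \<subseteq> adjoin A r" "D \<subseteq> adjoin A r"
    using P_subset_A D_subset_A subset_adjoin[OF A_subring] by blast+
  show "ext_val p = 1"
    using ext_val_restrict[OF p_in_A] v_p by simp
next
  fix a assume "a \<in> P"
  then show "ext_val a = 0"
    by (simp add: ext_val_def)
next
  fix a b assume "a \<in> adjoin A r" "b \<in> adjoin A r" "a \<notin> P"
  then show "b \<notin> P \<Longrightarrow> ext_val (a * b) = ext_val a + ext_val b"
    and "b \<notin> P \<Longrightarrow> a + b \<notin> P \<Longrightarrow> min (ext_val a) (ext_val b) \<le> ext_val (a + b)"
    and "a - b \<in> P \<Longrightarrow> ext_val a = ext_val b"
    by (simp_all add: ext_val_mult ext_val_add ext_val_cong)
qed

lemma r_notin_A: "r \<notin> A"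
proof
  assume "r \<in> A"
  then have "\<forall>i. coeff [:- r, 1:] i \<in> A"
    using A_subring by (intro coeff_pCons_in_subring coeff_const_in_subring subring_uminus subring_1)
  moreover have "poly [:- r, 1:] r \<in> P"
    using ideal_0[OF P_ideal] by simp
  ultimately have "coeff [:- r, 1:] 1 \<in> P"
    using transcendental unfolding transcendental_mod_def by blast
  then show False
    using one_notin_P by simp
qed

end

section \<open>Valuations on which every element is algebraic\<close>

definition Union_fun :: "('a \<times> 'b) set set \<Rightarrow> 'a \<Rightarrow> 'b" where
  "Union_fun C a = (THE n. (a, n) \<in> \<Union>C)"

lemma Union_fun_eq:
  assumes graphs: "\<forall>\<Gamma>\<in>C. \<exists>A f. \<Gamma> = (\<lambda>a. (a, f a)) ` A" and chain: "chain\<^sub>\<subseteq> C"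
    and "\<Gamma> \<in> C" "(a, n) \<in> \<Gamma>"
  shows "Union_fun C a = n"
  unfolding Union_fun_def
proof (rule the_equality)
  fix m assume "(a, m) \<in> \<Union>C"
  then obtain \<Gamma>' where \<Gamma>': "\<Gamma>' \<in> C" "(a, m) \<in> \<Gamma>'" "(a, n) \<in> \<Gamma>'"
    using chain_subset_common[OF chain, of "(a, m)" "(a, n)"] assms(3,4) by blast
  then obtain A f where "\<Gamma>' = (\<lambda>a. (a, f a)) ` A"
    using graphs by blast
  then show "m = n"
    using \<Gamma>'(2,3) by auto
qed (use assms(3,4) in blast)

lemma Union_chain_of_graphs:
  assumes graphs: "\<forall>\<Gamma>\<in>C. \<exists>A f. \<Gamma> = (\<lambda>a. (a, f a)) ` A" and chain: "chain\<^sub>\<subseteq> C"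
  shows "\<Union>C = (\<lambda>a. (a, Union_fun C a)) ` (fst ` \<Union>C)"
proof (intro equalityI subsetI)
  fix z assume z: "z \<in> \<Union>C"
  obtain a n where an: "z = (a, n)"
    by (cases z)
  obtain \<Gamma> where "\<Gamma> \<in> C" "(a, n) \<in> \<Gamma>"
    using z an by blast
  then have "Union_fun C a = n"
    using Union_fun_eq[OF graphs chain] by blast
  moreover have "a \<in> fst ` \<Union>C"
    using image_eqI[of a fst z "\<Union>C"] z an by simp
  ultimately show "z \<in> (\<lambda>a. (a, Union_fun C a)) ` (fst ` \<Union>C)"
    unfolding an by blast
next
  fix z assume "z \<in> (\<lambda>a. (a, Union_fun C a)) ` (fst ` \<Union>C)"
  then obtain w where w: "w \<in> \<Union>C" "z = (fst w, Union_fun C (fst w))"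
    by blast
  then obtain \<Gamma> where "\<Gamma> \<in> C" "(fst w, snd w) \<in> \<Gamma>"
    by auto
  then have "Union_fun C (fst w) = snd w"
    using Union_fun_eq[OF graphs chain] by blast
  then show "z \<in> \<Union>C"
    using w by simp
qed

context p_adic_mod
begin

definition val_graph :: "'a set \<Rightarrow> ('a \<Rightarrow> nat) \<Rightarrow> ('a \<times> nat) set" where
  "val_graph A v = (\<lambda>a. (a, v a)) ` A"

lemma fst_val_graph: "fst ` val_graph A v = A"
  unfolding val_graph_def by (simp add: image_image)

definition val_graphs :: "('a \<times> nat) set set" where
  "val_graphs = {val_graph A v | A v. valuation_on A v}"

lemma val_graphs_are_graphs: "C \<subseteq> val_graphs \<Longrightarrow> \<forall>\<Gamma>\<in>C. \<exists>A f. \<Gamma> = (\<lambda>a. (a, f a)) ` A"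
  unfolding val_graphs_def val_graph_def by blast

lemma val_graphs_member:
  assumes C: "C \<subseteq> val_graphs" and chain: "chain\<^sub>\<subseteq> C" and \<Gamma>: "\<Gamma> \<in> C"
  shows "\<exists>A v. valuation_on A v \<and> \<Gamma> = val_graph A v \<and> A \<subseteq> fst ` \<Union>C \<and> (\<forall>x\<in>A. Union_fun C x = v x)"
proof -
  obtain A v where Av: "valuation_on A v" "\<Gamma> = val_graph A v"
    using C \<Gamma> unfolding val_graphs_def by blast
  moreover have "Union_fun C x = v x" if "x \<in> A" for x
    using Union_fun_eq[OF val_graphs_are_graphs[OF C] chain \<Gamma>] Av(2) that
    unfolding val_graph_def by blast
  moreover have "A = fst ` \<Gamma>"
    using Av(2) fst_val_graph by simp
  then have "A \<subseteq> fst ` \<Union>C"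
    using \<Gamma> by blast
  ultimately show ?thesis
    by blast
qed

text \<open>Each axiom of a valuation involves at most two elements, which already lie in a common member
  of the chain.\<close>

lemma val_graphs_common:
  assumes C: "C \<subseteq> val_graphs" and chain: "chain\<^sub>\<subseteq> C" and ab: "a \<in> fst ` \<Union>C" "b \<in> fst ` \<Union>C"
  shows "\<exists>A v. valuation_on A v \<and> a \<in> A \<and> b \<in> A \<and> (\<forall>x\<in>A. Union_fun C x = v x)"
proof -
  obtain w1 w2 where "w1 \<in> \<Union>C" "w2 \<in> \<Union>C" "a = fst w1" "b = fst w2"
    using ab by blast
  then obtain \<Gamma> where "\<Gamma> \<in> C" "w1 \<in> \<Gamma>" "w2 \<in> \<Gamma>" "a = fst w1" "b = fst w2"
    using chain_subset_common[OF chain] by blast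
  moreover obtain A v where "valuation_on A v" "\<Gamma> = val_graph A v" "\<forall>x\<in>A. Union_fun C x = v x"
    using val_graphs_member[OF C chain \<open>\<Gamma> \<in> C\<close>] by blast
  ultimately show ?thesis
    using fst_val_graph by blast
qed

lemma subring_fst_Union_val_graphs:
  assumes C: "C \<subseteq> val_graphs" and chain: "chain\<^sub>\<subseteq> C" and "C \<noteq> {}"
  shows "is_subring (fst ` \<Union>C)"
proof -
  let ?C = "(`) fst ` C"
  have "fst ` \<Union>C = \<Union>?C" "?C \<noteq> {}"
    using \<open>C \<noteq> {}\<close> by (simp_all add: image_Union)
  moreover have "chain\<^sub>\<subseteq> ?C"
    using chain unfolding chain_subset_def by (blast intro: image_mono)
  moreover have "is_subring S" if S: "S \<in> ?C" for S
  proof -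
    obtain \<Gamma> where "\<Gamma> \<in> C" "S = fst ` \<Gamma>"
      using S by blast
    then obtain A v where "valuation_on A v" "S = A"
      using C fst_val_graph unfolding val_graphs_def by blast
    then show "is_subring S"
      unfolding valuation_on_def by blast
  qed
  ultimately show ?thesis
    using subring_Union_chain[of ?C] by simp
qed

lemma valuation_on_Union_chain:
  assumes C: "C \<subseteq> val_graphs" and chain: "chain\<^sub>\<subseteq> C" and "C \<noteq> {}"
  shows "valuation_on (fst ` \<Union>C) (Union_fun C)"
  unfolding valuation_on_def
proof (intro conjI ballI impI)
  show "is_subring (fst ` \<Union>C)"
    using subring_fst_Union_val_graphs[OF assms] .
  obtain \<Gamma> where "\<Gamma> \<in> C"
    using \<open>C \<noteq> {}\<close> by blast
  then obtain A v where Av: "valuation_on A v" "A \<subseteq> fst ` \<Union>C" "\<forall>x\<in>A. Union_fun C x = v x"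
    using val_graphs_member[OF C chain] by blast
  show "P \<subseteq> fst ` \<Union>C" "D \<subseteq> fst ` \<Union>C" "Union_fun C p = 1"
    using Av p_in_D unfolding valuation_on_def by auto
  show "Union_fun C a = 0" if "a \<in> P" for a
    using Av that unfolding valuation_on_def by auto
next
  fix a b assume ab: "a \<in> fst ` \<Union>C" "b \<in> fst ` \<Union>C" "a \<notin> P"
  obtain A v where Av: "valuation_on A v" "a \<in> A" "b \<in> A" "\<forall>x\<in>A. Union_fun C x = v x"
    using val_graphs_common[OF C chain ab(1,2)] by blast
  interpret valuation D p P A v
    by unfold_locales (fact Av(1))
  show "b \<notin> P \<Longrightarrow> Union_fun C (a * b) = Union_fun C a + Union_fun C b"
    using v_mult[OF Av(2,3) ab(3)] subring_mult[OF A_subring Av(2,3)] Av(2-4) by simp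
  show "b \<notin> P \<Longrightarrow> a + b \<notin> P \<Longrightarrow> min (Union_fun C a) (Union_fun C b) \<le> Union_fun C (a + b)"
    using v_add[OF Av(2,3) ab(3)] subring_add[OF A_subring Av(2,3)] Av(2-4) by simp
  show "a - b \<in> P \<Longrightarrow> Union_fun C a = Union_fun C b"
    using v_cong[OF Av(2,3)] Av(2-4) by simp
qed

lemma val_graphs_Union_chain:
  assumes "C \<subseteq> val_graphs" "chain\<^sub>\<subseteq> C" "C \<noteq> {}"
  shows "\<Union>C \<in> val_graphs"
  using valuation_on_Union_chain[OF assms] Union_chain_of_graphs[OF val_graphs_are_graphs assms(2)] assms(1)
  unfolding val_graphs_def val_graph_def by blast

lemma exists_valuation_algebraic: "\<exists>A v. valuation_on A v \<and> (\<forall>r. \<not> transcendental_mod A r)"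
proof -
  have "val_graph D_plus_P ord_mod \<in> val_graphs"
    using valuation_on_D_plus_P unfolding val_graphs_def by blast
  then obtain M where "M \<in> val_graphs" and max: "\<And>X. X \<in> val_graphs \<Longrightarrow> M \<subseteq> X \<Longrightarrow> X = M"
  proof (rule Zorn_above[OF _ val_graphs_Union_chain])
    fix M assume "M \<in> val_graphs" "\<And>X. X \<in> val_graphs \<Longrightarrow> M \<subseteq> X \<Longrightarrow> X = M"
    then show thesis
      by (rule that)
  qed
  then obtain A v where Av: "valuation_on A v" "M = val_graph A v"
    unfolding val_graphs_def by blast
  interpret valuation D p P A v
    by unfold_locales (fact Av(1))
  have "\<not> transcendental_mod A r" for r
  proof
    assume "transcendental_mod A r"
    then interpret gauss_extension D p P A v r
      by unfold_locales
    have "val_graph (adjoin A r) ext_val \<in> val_graphs"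
      using valuation_on_adjoin unfolding val_graphs_def by blast
    moreover have "M \<subseteq> val_graph (adjoin A r) ext_val"
      unfolding Av(2) val_graph_def
    proof (rule image_subsetI)
      fix a assume "a \<in> A"
      then show "(a, v a) \<in> (\<lambda>a. (a, ext_val a)) ` adjoin A r"
        using ext_val_restrict subset_adjoin[OF A_subring] by (intro image_eqI[of _ _ a]) auto
    qed
    ultimately have "val_graph (adjoin A r) ext_val = val_graph A v"
      using max Av(2) by blast
    from arg_cong[OF this, of "image fst"] have "adjoin A r = A"
      by (simp add: fst_val_graph)
    then show False
      using gen_in_adjoin[OF A_subring, of r] r_notin_A by simp
  qed
  then show ?thesis
    using Av(1) by blast
qed

end

section \<open>Algebraic elements and dominating subrings\<close>

text \<open>Multiplying \<open>g(r) = g_0 + \<dots> + a r^k\<close> by \<open>a^(k-1)\<close> turns \<open>a r\<close> into a root of a monic polynomial.\<close>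

lemma scaled_root_identity:
  fixes a r :: "'a::comm_ring_1"
  assumes "k \<ge> 1"
  shows "(a * r) ^ k + (\<Sum>i<k. (g i * a ^ (k - 1 - i)) * (a * r) ^ i)
    = a ^ (k - 1) * ((\<Sum>i<k. g i * r ^ i) + a * r ^ k)"
proof -
  have "a ^ (k - 1) * (a * r ^ k) = (a * r) ^ k"
    using assms power_minus_mult[of k a] by (simp add: power_mult_distrib mult.assoc[symmetric])
  moreover have "a ^ (k - 1) * (\<Sum>i<k. g i * r ^ i) = (\<Sum>i<k. (g i * a ^ (k - 1 - i)) * (a * r) ^ i)"
    unfolding sum_distrib_left
  proof (rule sum.cong)
    fix i assume "i \<in> {..<k}"
    then have "a ^ (k - 1) = a ^ (k - 1 - i) * a ^ i"
      by (simp flip: power_add)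
    then show "a ^ (k - 1) * (g i * r ^ i) = (g i * a ^ (k - 1 - i)) * (a * r) ^ i"
      by (simp add: power_mult_distrib mult_ac)
  qed simp
  ultimately show ?thesis
    by (simp add: distrib_left add.commute)
qed

context p_adic_mod
begin

lemma truncated_relation_mod_P:
  assumes "poly g r \<in> P" "\<exists>i. coeff g i \<notin> P"
  shows "\<exists>k\<ge>1. coeff g k \<notin> P \<and> (\<Sum>i<k. coeff g i * r ^ i) + coeff g k * r ^ k \<in> P"
proof -
  let ?S = "{i. coeff g i \<notin> P}"
  have S: "?S \<subseteq> {..degree g}"
  proof
    fix i assume "i \<in> ?S"
    then have "coeff g i \<noteq> 0"
      using ideal_0[OF P_ideal] by auto
    then show "i \<in> {..degree g}"
      using le_degree by simp
  qed
  then have fin: "finite ?S"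
    using finite_subset by blast
  define k where "k = Max ?S"
  have k: "coeff g k \<notin> P" "k \<le> degree g"
    using S Max_in[OF fin] assms(2) unfolding k_def by auto
  have "(\<Sum>i\<in>{..degree g} - {..k}. coeff g i * r ^ i) \<in> P"
  proof (rule ideal_sum[OF P_ideal])
    fix i assume "i \<in> {..degree g} - {..k}"
    then have "coeff g i \<in> P"
      using Max_ge[OF fin, of i] unfolding k_def by fastforce
    then show "coeff g i * r ^ i \<in> P"
      by (rule ideal_mult_right[OF P_ideal])
  qed
  moreover have "(\<Sum>i\<le>k. coeff g i * r ^ i) = poly g r - (\<Sum>i\<in>{..degree g} - {..k}. coeff g i * r ^ i)"
    unfolding poly_altdef using sum_diff[of "{..degree g}" "{..k}" "\<lambda>i. coeff g i * r ^ i"] k(2)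
    by simp
  ultimately have low: "(\<Sum>i<k. coeff g i * r ^ i) + coeff g k * r ^ k \<in> P"
    using ideal_diff[OF P_ideal assms(1)] by (simp add: lessThan_Suc_atMost[symmetric])
  moreover have "k \<ge> 1"
    using low k(1) by (cases k) auto
  ultimately show ?thesis
    using k(1) by blast
qed

lemma algebraic_mod_integral_multiple:
  assumes A: "is_subring A" "P \<subseteq> A" and "\<not> transcendental_mod A r"
  shows "\<exists>a\<in>A. a \<notin> P \<and> integral_over A (a * r)"
proof -
  obtain g where g: "\<forall>i. coeff g i \<in> A" "poly g r \<in> P" "\<exists>i. coeff g i \<notin> P"
    using assms(3) unfolding transcendental_mod_def by blast
  then obtain k where k: "k \<ge> 1" "coeff g k \<notin> P"
    and low: "(\<Sum>i<k. coeff g i * r ^ i) + coeff g k * r ^ k \<in> P"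
    using truncated_relation_mod_P by blast
  define a where "a = coeff g k"
  define \<pi> where "\<pi> = a ^ (k - 1) * ((\<Sum>i<k. coeff g i * r ^ i) + a * r ^ k)"
  define c where "c i = coeff g i * a ^ (k - 1 - i) - (if i = 0 then \<pi> else 0)" for i
  have "\<pi> \<in> A"
    using ideal_mult_left[OF P_ideal low] A(2) unfolding \<pi>_def a_def by blast
  then have cA: "\<forall>i<k. c i \<in> A"
    using g(1) A(1) unfolding c_def a_def by (auto intro!: subring_diff subring_mult subring_power subring_0)
  have "(\<Sum>i<k. c i * (a * r) ^ i) = (\<Sum>i<k. (coeff g i * a ^ (k - 1 - i)) * (a * r) ^ i) - \<pi>"
    using k by (simp add: c_def left_diff_distrib sum_subtractf sum.delta if_distrib[of "\<lambda>x. x * _"] cong: if_cong)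
  then have "(a * r) ^ k + (\<Sum>i<k. c i * (a * r) ^ i)
      = ((a * r) ^ k + (\<Sum>i<k. (coeff g i * a ^ (k - 1 - i)) * (a * r) ^ i)) - \<pi>"
    by (simp add: algebra_simps)
  also have "\<dots> = 0"
    using scaled_root_identity[OF k(1), of a r "coeff g"] unfolding \<pi>_def by simp
  finally show ?thesis
    using g(1) k(2) cA unfolding integral_over_def a_def by blast
qed

end

context valuation
begin

inductive_set val_ideal :: "'a set \<Rightarrow> nat \<Rightarrow> 'a set" for S \<theta> where
  base: "d \<in> A \<Longrightarrow> val_gt v \<theta> d \<Longrightarrow> w \<in> S \<Longrightarrow> d * w \<in> val_ideal S \<theta>"
| add: "x \<in> val_ideal S \<theta> \<Longrightarrow> y \<in> val_ideal S \<theta> \<Longrightarrow> x + y \<in> val_ideal S \<theta>"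

text \<open>\<open>S\<close> dominates \<open>v\<close> if it does not force any element of \<open>A\<close> to have a larger value than it has.\<close>

definition dominates :: "'a set \<Rightarrow> bool" where
  "dominates S \<longleftrightarrow> (\<forall>e\<in>A. e \<notin> P \<longrightarrow> e \<notin> val_ideal S (v e))"

lemma val_ideal_mono: "x \<in> val_ideal S \<theta> \<Longrightarrow> S \<subseteq> S' \<Longrightarrow> x \<in> val_ideal S' \<theta>"
  by (induction rule: val_ideal.induct) (auto intro: val_ideal.intros)

lemma val_ideal_0: "is_subring S \<Longrightarrow> 0 \<in> val_ideal S \<theta>"
  using val_ideal.base[OF subring_0[OF A_subring] _ subring_1, of \<theta> S] ideal_0[OF P_ideal]
  by (simp add: val_gt_def)

lemma val_ideal_uminus:
  assumes "is_subring S"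
  shows "x \<in> val_ideal S \<theta> \<Longrightarrow> - x \<in> val_ideal S \<theta>"
proof (induction rule: val_ideal.induct)
  case (base d w)
  then show ?case
    using val_ideal.base[of d \<theta> "- w"] subring_uminus[OF assms] by simp
next
  case (add x y)
  then show ?case
    using val_ideal.add[of "- x" S \<theta> "- y"] by simp
qed

lemma val_ideal_mult_A:
  assumes a: "a \<in> A"
  shows "x \<in> val_ideal S \<theta> \<Longrightarrow> a * x \<in> val_ideal S (\<theta> + v a)"
proof (induction rule: val_ideal.induct)
  case (base d w)
  have "val_gt v (\<theta> + v a) (d * a)"
    using val_gt_mult[OF base(1) a base(2) val_ge_self] .
  then have "(d * a) * w \<in> val_ideal S (\<theta> + v a)"
    using val_ideal.base[OF subring_mult[OF A_subring base(1) a] _ base(3)] by blast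
  then show ?case
    by (simp add: mult_ac)
next
  case (add x y)
  then show ?case
    using val_ideal.add by (simp add: distrib_left)
qed

lemma val_ideal_mult:
  assumes S: "is_subring S" and y: "y \<in> val_ideal S \<theta>'"
  shows "x \<in> val_ideal S \<theta> \<Longrightarrow> x * y \<in> val_ideal S (\<theta> + \<theta>')"
proof (induction rule: val_ideal.induct)
  case (base d w)
  show ?case
    using y
  proof (induction rule: val_ideal.induct)
    case (base d' w')
    have "val_ge v \<theta>' d'"
      using base(2) by (auto simp: val_ge_def val_gt_def)
    then have "val_gt v (\<theta> + \<theta>') (d * d')"
      using val_gt_mult[OF \<open>d \<in> A\<close> base(1) \<open>val_gt v \<theta> d\<close>] by simp
    then have "(d * d') * (w * w') \<in> val_ideal S (\<theta> + \<theta>')"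
      using val_ideal.base[OF subring_mult[OF A_subring \<open>d \<in> A\<close> base(1)] _
          subring_mult[OF S \<open>w \<in> S\<close> base(3)]] by blast
    then show ?case
      by (simp add: mult_ac)
  next
    case (add x y)
    then show ?case
      using val_ideal.add by (simp add: distrib_left)
  qed
next
  case (add x1 x2)
  then show ?case
    using val_ideal.add by (simp add: distrib_right)
qed

lemma val_ideal_sum:
  "is_subring S \<Longrightarrow> (\<And>j. j \<in> F \<Longrightarrow> f j \<in> val_ideal S \<theta>) \<Longrightarrow> sum f F \<in> val_ideal S \<theta>"
  by (induction F rule: infinite_finite_induct) (auto intro: val_ideal_0 val_ideal.add)

lemma val_ideal_A: "x \<in> val_ideal A \<theta> \<Longrightarrow> x \<in> A \<and> val_gt v \<theta> x"
proof (induction rule: val_ideal.induct)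
  case (base d w)
  then show ?case
    using val_gt_mult[OF base(1,3,2), of 0] subring_mult[OF A_subring base(1,3)] by (simp add: val_ge_def)
next
  case (add x y)
  then show ?case
    using val_gt_add subring_add[OF A_subring] by blast
qed

lemma dominates_A: "dominates A"
  unfolding dominates_def using val_ideal_A by (auto simp: val_gt_def)

lemma val_ideal_Union_chain:
  assumes chain: "chain\<^sub>\<subseteq> C"
  shows "x \<in> val_ideal (\<Union>C) \<theta> \<Longrightarrow> \<exists>S\<in>C. x \<in> val_ideal S \<theta>"
proof (induction rule: val_ideal.induct)
  case (base d w)
  then obtain S where "S \<in> C" "w \<in> S"
    by blast
  then show ?case
    using val_ideal.base[OF base(1,2)] by blast
next
  case (add x y)
  then obtain S1 S2 where S: "S1 \<in> C" "x \<in> val_ideal S1 \<theta>" "S2 \<in> C" "y \<in> val_ideal S2 \<theta>"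
    by blast
  have "S1 \<subseteq> S2 \<or> S2 \<subseteq> S1"
    using chain S(1,3) unfolding chain_subset_def by blast
  then show ?case
  proof
    assume "S1 \<subseteq> S2"
    then show ?case
      using S(3,4) val_ideal.add[OF val_ideal_mono[OF S(2)]] by blast
  next
    assume "S2 \<subseteq> S1"
    then show ?case
      using S(1,2) val_ideal.add[OF _ val_ideal_mono[OF S(4)]] by blast
  qed
qed

lemma exists_maximal_dominating:
  obtains V where "is_subring V" "A \<subseteq> V" "dominates V"
    "\<And>S. is_subring S \<Longrightarrow> V \<subseteq> S \<Longrightarrow> dominates S \<Longrightarrow> S = V"
proof -
  let ?F = "{S. is_subring S \<and> A \<subseteq> S \<and> dominates S}"
  have "A \<in> ?F"
    using A_subring dominates_A by blast
  moreover have "\<Union>C \<in> ?F" if C: "C \<subseteq> ?F" "chain\<^sub>\<subseteq> C" "C \<noteq> {}" for C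
  proof -
    have "is_subring (\<Union>C)" "A \<subseteq> \<Union>C"
      using subring_Union_chain[OF C(3,2)] C(1,3) by blast+
    moreover have "dominates (\<Union>C)"
      using val_ideal_Union_chain[OF C(2)] C(1) unfolding dominates_def by blast
    ultimately show ?thesis
      by blast
  qed
  ultimately obtain V where "V \<in> ?F" and max: "\<And>X. X \<in> ?F \<Longrightarrow> V \<subseteq> X \<Longrightarrow> X = V"
  proof (rule Zorn_above)
    fix V assume "V \<in> ?F" "\<And>X. X \<in> ?F \<Longrightarrow> V \<subseteq> X \<Longrightarrow> X = V"
    then show thesis
      by (rule that)
  qed
  then have V: "is_subring V" "A \<subseteq> V" "dominates V"
    by simp_all
  show thesis
  proof (rule that[OF V])
    fix S assume "is_subring S" "V \<subseteq> S" "dominates S"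
    then show "S = V"
      using max[of S] V(2) by blast
  qed
qed

end

locale dominating = valuation +
  fixes V :: "'a set"
  assumes V_subring: "is_subring V" and A_subset_V: "A \<subseteq> V" and dominates_V: "dominates V"
    and V_maximal: "\<And>S. is_subring S \<Longrightarrow> V \<subseteq> S \<Longrightarrow> dominates S \<Longrightarrow> S = V"
begin

lemma p_not_unit_in_V: "\<not> (\<exists>w\<in>V. p * w = 1)"
proof
  assume "\<exists>w\<in>V. p * w = 1"
  then obtain w where "w \<in> V" "p * w = 1"
    by blast
  moreover have "val_gt v (v 1) p"
    using v_p v_1 by (simp add: val_gt_def)
  ultimately have "p * w \<in> val_ideal V (v 1)"
    using val_ideal.base[OF p_in_A] by blast
  then have "1 \<in> val_ideal V (v 1)"
    using \<open>p * w = 1\<close> by simp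
  then show False
    using dominates_V subring_1[OF A_subring] one_notin_P unfolding dominates_def by blast
qed

lemma mem_if_dominates_adjoin:
  assumes "dominates (adjoin V y)"
  shows "y \<in> V"
proof -
  have "adjoin V y = V"
    using V_maximal[OF adjoin_subring[OF V_subring] subset_adjoin[OF V_subring] assms] .
  then show ?thesis
    using gen_in_adjoin[OF V_subring, of y] by simp
qed

lemma val_ideal_adjoin_power_span:
  assumes K: "K \<ge> 1" and c: "\<forall>i<K. c i \<in> V" and rel: "y ^ K + (\<Sum>i<K. c i * y ^ i) = 0"
  shows "x \<in> val_ideal (adjoin V y) \<theta> \<Longrightarrow> \<exists>s. (\<forall>l<K. s l \<in> val_ideal V \<theta>) \<and> x * y ^ j = (\<Sum>l<K. s l * y ^ l)"
proof (induction arbitrary: j rule: val_ideal.induct)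
  case (base d t)
  obtain s where s: "\<forall>l<K. s l \<in> V" "t * y ^ j = (\<Sum>l<K. s l * y ^ l)"
    using adjoin_mult_power_in_power_span[OF V_subring K c rel base(3)] by blast
  show ?case
  proof (intro exI[of _ "\<lambda>l. d * s l"] conjI)
    show "\<forall>l<K. d * s l \<in> val_ideal V \<theta>"
      using s(1) val_ideal.base[OF base(1,2)] by blast
    show "d * t * y ^ j = (\<Sum>l<K. d * s l * y ^ l)"
      using s(2) by (simp add: sum_distrib_left mult.assoc)
  qed
next
  case (add x1 x2)
  obtain s1 where s1: "\<forall>l<K. s1 l \<in> val_ideal V \<theta>" "x1 * y ^ j = (\<Sum>l<K. s1 l * y ^ l)"
    using add.IH(1) by blast
  obtain s2 where s2: "\<forall>l<K. s2 l \<in> val_ideal V \<theta>" "x2 * y ^ j = (\<Sum>l<K. s2 l * y ^ l)"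
    using add.IH(2) by blast
  show ?case
  proof (intro exI[of _ "\<lambda>l. s1 l + s2 l"] conjI)
    show "\<forall>l<K. s1 l + s2 l \<in> val_ideal V \<theta>"
      using s1(1) s2(1) val_ideal.add by blast
    show "(x1 + x2) * y ^ j = (\<Sum>l<K. (s1 l + s2 l) * y ^ l)"
      using s1(2) s2(2) by (simp add: distrib_right sum.distrib)
  qed
qed

text \<open>Integral closedness of \<open>V\<close>: if \<open>e \<in> A\<close> lay in the ideal of \<open>V[y]\<close> generated by elements of value
  \<open>> v e\<close>, the determinant trick would put \<open>e^K\<close> into the ideal of \<open>V\<close> generated by elements of value
  \<open>> K v e = v (e^K)\<close>.\<close>

lemma integral_mem:
  assumes "integral_over V y"
  shows "y \<in> V"
proof (rule mem_if_dominates_adjoin)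
  obtain K c where c: "\<forall>i<K. c i \<in> V" and rel: "y ^ K + (\<Sum>i<K. c i * y ^ i) = 0"
    using assms unfolding integral_over_def by blast
  have K: "K \<ge> 1"
    using rel by (cases K) auto
  show "dominates (adjoin V y)"
    unfolding dominates_def
  proof (intro ballI impI notI)
    fix e assume e: "e \<in> A" "e \<notin> P" and eJ: "e \<in> val_ideal (adjoin V y) (v e)"
    have "\<forall>j. \<exists>s. (\<forall>l<K. s l \<in> val_ideal V (v e)) \<and> e * y ^ j = (\<Sum>l<K. s l * y ^ l)"
      using val_ideal_adjoin_power_span[OF K c rel eJ] by blast
    then obtain E where E: "\<forall>j. (\<forall>l<K. E j l \<in> val_ideal V (v e)) \<and> e * y ^ j = (\<Sum>l<K. E j l * y ^ l)"
      by (rule choice[THEN exE])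
    interpret filtration "\<lambda>n. val_ideal V (n * v e)" e
    proof unfold_locales
      fix n m :: nat and a b
      show "0 \<in> val_ideal V (n * v e)"
        using val_ideal_0[OF V_subring] .
      show "a \<in> val_ideal V (n * v e) \<Longrightarrow> b \<in> val_ideal V (n * v e) \<Longrightarrow> a + b \<in> val_ideal V (n * v e)"
        by (rule val_ideal.add)
      show "a \<in> val_ideal V (n * v e) \<Longrightarrow> - a \<in> val_ideal V (n * v e)"
        by (rule val_ideal_uminus[OF V_subring])
      show "a \<in> val_ideal V (n * v e) \<Longrightarrow> e * a \<in> val_ideal V (Suc n * v e)"
        using val_ideal_mult_A[OF e(1), of a V "n * v e"] by (simp add: add.commute)
      show "a \<in> val_ideal V (n * v e) \<Longrightarrow> b \<in> val_ideal V (m * v e) \<Longrightarrow> a * b \<in> val_ideal V ((n + m) * v e)"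
        using val_ideal_mult[OF V_subring, of b "m * v e" a "n * v e"] by (simp add: add_mult_distrib)
    qed
    have "\<forall>j<K. e * y ^ j = (\<Sum>l<K. E j l * y ^ l)" "\<forall>j<K. \<forall>l<K. E j l \<in> val_ideal V (1 * v e)"
      using E by simp_all
    then have "e ^ K \<in> val_ideal V (K * v e)"
      by (rule det_trick[where m = "\<lambda>l. y ^ l" and E = E, OF K power_0])
    then have "e ^ K \<in> val_ideal V (v (e ^ K))"
      using v_power[OF e] by simp
    then show False
      using dominates_V subring_power[OF A_subring e(1)] power_notin_P[OF e(2)] unfolding dominates_def by blast
  qed
qed

lemma scaled_adjoin_mem:
  assumes a: "a \<in> A" "a \<notin> P" and ar: "a * r \<in> V" and d: "d \<in> A" "val_gt v \<theta> d"
    and h: "\<forall>i. coeff h i \<in> V" and N: "degree h \<le> N"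
  shows "a ^ N * (d * poly h (p ^ v a * r)) \<in> val_ideal V (\<theta> + N * v a)"
proof -
  let ?n = "v a" and ?y = "a * r"
  let ?c = "\<lambda>j. d * a ^ (N - j) * (p ^ ?n) ^ j"
  have summand: "a ^ N * (d * (coeff h j * (p ^ ?n * r) ^ j)) = ?c j * (coeff h j * ?y ^ j)"
    if "j \<in> {..degree h}" for j
  proof -
    have "a ^ N = a ^ (N - j) * a ^ j"
      using that N by (simp flip: power_add)
    then show ?thesis
      by (simp add: power_mult_distrib power_mult mult_ac)
  qed
  have "a ^ N * (d * poly h (p ^ ?n * r)) = (\<Sum>j\<le>degree h. ?c j * (coeff h j * ?y ^ j))"
    unfolding poly_altdef sum_distrib_left using summand by (rule sum.cong[OF refl])
  also have "\<dots> \<in> val_ideal V (\<theta> + N * ?n)"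
  proof (rule val_ideal_sum[OF V_subring])
    fix j assume "j \<in> {..degree h}"
    then have j: "j \<le> N"
      using N by simp
    have a_pow: "a ^ (N - j) \<in> A" "val_ge v ((N - j) * ?n) (a ^ (N - j))"
      using subring_power[OF A_subring a(1)] v_power[OF a] by (simp_all add: val_ge_def)
    have "p ^ ?n \<in> A" "p ^ ?n \<notin> P"
      using subring_power[OF A_subring p_in_A] power_notin_P[OF p_notin_P] .
    then have p_pow: "(p ^ ?n) ^ j \<in> A" "val_ge v (?n * j) ((p ^ ?n) ^ j)"
      using subring_power[OF A_subring] v_power v_power[OF p_in_A p_notin_P] v_p by (simp_all add: val_ge_def)
    have "val_gt v (\<theta> + (N - j) * ?n) (d * a ^ (N - j))"
      using val_gt_mult[OF d(1) a_pow(1) d(2) a_pow(2)] .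
    then have "val_gt v (\<theta> + (N - j) * ?n + ?n * j) (?c j)"
      using val_gt_mult[OF subring_mult[OF A_subring d(1) a_pow(1)] p_pow(1) _ p_pow(2)] by blast
    moreover have "\<theta> + (N - j) * ?n + ?n * j = \<theta> + N * ?n"
    proof -
      obtain m where "N = j + m"
        using j le_iff_add by blast
      then show ?thesis
        by (simp add: algebra_simps)
    qed
    moreover have "?c j \<in> A"
      using subring_mult[OF A_subring subring_mult[OF A_subring d(1) a_pow(1)] p_pow(1)] .
    moreover have "coeff h j * ?y ^ j \<in> V"
      using subring_mult[OF V_subring h[rule_format] subring_power[OF V_subring ar]] .
    ultimately show "?c j * (coeff h j * ?y ^ j) \<in> val_ideal V (\<theta> + N * ?n)"
      using val_ideal.base[of "?c j" "\<theta> + N * ?n" "coeff h j * ?y ^ j" V] by simp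
  qed
  finally show ?thesis .
qed

lemma scaled_val_ideal_adjoin:
  assumes a: "a \<in> A" "a \<notin> P" and ar: "a * r \<in> V"
  shows "x \<in> val_ideal (adjoin V (p ^ v a * r)) \<theta> \<Longrightarrow> \<exists>N0. \<forall>N\<ge>N0. a ^ N * x \<in> val_ideal V (\<theta> + N * v a)"
proof (induction rule: val_ideal.induct)
  case (base d t)
  obtain h where "\<forall>i. coeff h i \<in> V" "t = poly h (p ^ v a * r)"
    using base(3) unfolding adjoin_def by blast
  then have "\<forall>N\<ge>degree h. a ^ N * (d * t) \<in> val_ideal V (\<theta> + N * v a)"
    using scaled_adjoin_mem[OF a ar base(1,2)] by simp
  then show ?case
    by blast
next
  case (add x1 x2)
  then obtain N1 N2 where "\<forall>N\<ge>N1. a ^ N * x1 \<in> val_ideal V (\<theta> + N * v a)"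
    "\<forall>N\<ge>N2. a ^ N * x2 \<in> val_ideal V (\<theta> + N * v a)"
    by blast
  then have "\<forall>N\<ge>max N1 N2. a ^ N * (x1 + x2) \<in> val_ideal V (\<theta> + N * v a)"
    using val_ideal.add by (simp add: distrib_left)
  then show ?case
    by blast
qed

text \<open>If \<open>a r \<in> V\<close> with \<open>a \<in> A\<close>, then \<open>V[p^(v a) r]\<close> still dominates \<open>v\<close>, because \<open>a\<close> and \<open>p^(v a)\<close> have the
  same value.\<close>

lemma p_power_mult_mem:
  assumes a: "a \<in> A" "a \<notin> P" and ar: "a * r \<in> V"
  shows "p ^ v a * r \<in> V"
proof (rule mem_if_dominates_adjoin)
  show "dominates (adjoin V (p ^ v a * r))"
    unfolding dominates_def
  proof (intro ballI impI notI)
    fix e assume e: "e \<in> A" "e \<notin> P" and eJ: "e \<in> val_ideal (adjoin V (p ^ v a * r)) (v e)"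
    obtain N where "a ^ N * e \<in> val_ideal V (v e + N * v a)"
      using scaled_val_ideal_adjoin[OF a ar eJ] by blast
    moreover have "v (a ^ N * e) = v e + N * v a"
      using v_mult[OF subring_power[OF A_subring a(1)] e(1) power_notin_P[OF a(2)] e(2)] v_power[OF a] by simp
    ultimately have "a ^ N * e \<in> val_ideal V (v (a ^ N * e))"
      by simp
    then show False
      using dominates_V subring_mult[OF A_subring subring_power[OF A_subring a(1)] e(1)]
        mult_notin_P[OF power_notin_P[OF a(2)] e(2)] unfolding dominates_def by blast
  qed
qed

lemma algebraic_p_power_mult_mem:
  assumes "\<not> transcendental_mod A r"
  shows "\<exists>n. p ^ n * r \<in> V"
proof -
  obtain a where a: "a \<in> A" "a \<notin> P" and int: "integral_over A (a * r)"
    using algebraic_mod_integral_multiple[OF A_subring P_subset_A assms] by blast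
  have "integral_over V (a * r)"
    using int A_subset_V unfolding integral_over_def by blast
  then show ?thesis
    using p_power_mult_mem[OF a integral_mem] by blast
qed

end

context p_adic
begin

lemma exists_p_dense_subring:
  "\<exists>V. is_subring V \<and> D \<subseteq> V \<and> \<not> (\<exists>w\<in>V. p * w = 1) \<and> (\<forall>r. \<exists>n. p ^ n * r \<in> V)"
proof -
  obtain P where P: "is_ideal P" "\<forall>a b. a * b \<in> P \<longrightarrow> a \<in> P \<or> b \<in> P" "P \<inter> D = {0}"
    using exists_prime_ideal_meeting_D_in_0 by blast
  interpret p_adic_mod D p P
    using P by unfold_locales blast+
  obtain A v where Av: "valuation_on A v" "\<forall>r. \<not> transcendental_mod A r"
    using exists_valuation_algebraic by blast
  interpret valuation D p P A v
    by unfold_locales (fact Av(1))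
  obtain V where V: "is_subring V" "A \<subseteq> V" "dominates V"
    "\<And>S. is_subring S \<Longrightarrow> V \<subseteq> S \<Longrightarrow> dominates S \<Longrightarrow> S = V"
  proof (rule exists_maximal_dominating)
    fix V assume "is_subring V" "A \<subseteq> V" "dominates V"
      "\<And>S. is_subring S \<Longrightarrow> V \<subseteq> S \<Longrightarrow> dominates S \<Longrightarrow> S = V"
    then show thesis
      by (rule that)
  qed
  interpret dominating D p P A v V
    by unfold_locales (fact V)+
  have "D \<subseteq> V"
    using D_subset_A A_subset_V by blast
  moreover have "\<forall>r. \<exists>n. p ^ n * r \<in> V"
    using algebraic_p_power_mult_mem Av(2) by blast
  ultimately show ?thesis
    using V_subring p_not_unit_in_V by blast
qed

end

theorem theorem2p1:
  fixes D :: "'a::comm_ring_1 set" and p q :: 'a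
  assumes "integral_domain_subring D"
    and "prime_in D p"
    and "\<forall>x. (\<forall>n::nat\<ge>1. \<exists>d\<in>D. x = p ^ n * d) \<longrightarrow> x = 0"
    and "p * q = 1"
  shows "\<exists>W. maximal_subring W \<and> integrally_closed_in W \<and> D \<subseteq> W \<and> conches W q"
proof -
  interpret p_adic D p
    using assms(1-3) by unfold_locales
  obtain V where V: "is_subring V" "D \<subseteq> V" "\<not> (\<exists>w\<in>V. p * w = 1)" "\<forall>r. \<exists>n. p ^ n * r \<in> V"
    using exists_p_dense_subring by blast
  have qp: "q * p = 1"
    using assms(4) by (simp add: mult.commute)
  have "p \<in> V" "q \<notin> V"
    using V(2,3) p_in_D assms(4) by blast+
  then obtain W where W: "V \<subseteq> W" "conches W q"
    using exists_conch_above[OF V(1) _ _ qp] by blast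
  have "\<forall>r. \<exists>n. p ^ n * r \<in> W"
    using V(4) W(1) by blast
  then have "maximal_subring W"
    by (rule conch_maximal_subring[OF W(2) qp])
  moreover have "integrally_closed_in W"
    using conch_integrally_closed[OF W(2)] .
  ultimately show ?thesis
    using V(2) W by blast
qed

end
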